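(* Let $G$ be a graph with line graph $L_G$. Then $$\mathcal E(L_G)\le 4\,\nu^-(L_G).$$ Equality holds if and only if $G$ consists of connected components $G_i=(V_i,E_i)$ with $n_i=|V_i|$ and $|E_i|\ge2$, together with possibly some isolated vertices and components that are single edges, such that each non-bipartite such component $G_i$ satisfies $|E_i|>|V_i|$ and $q_{n_i}(G_i)\ge 2$, and each bipartite such component $G_i$ is either a $4$-cycle or satisfies $|E_i|>|V_i|$ and $q_{n_i-1}(G_i)\ge2$.
   Context: All graphs are finite and simple. The line graph $L_G$ has the edges of $G$ as vertices, two adjacent iff they share an endpoint. $\mathcal E(H)$ is the sum of absolute values of the adjacency eigenvalues of $H$, and $\nu^-(H)$ the number of negative adjacency eigenvalues. For a graph $H$ on $p$ vertices, $q_1(H)\ge\cdots\ge q_p(H)$ are the eigenvalues of the signless Laplacian $Q(H)=D(H)+\mathcal A(H)$, where $D(H)$ is the diagonal degree matrix and $\mathcal A(H)$ the adjacency matrix. *)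

theory Defs
  imports "Jordan_Normal_Form.Matrix" "Jordan_Normal_Form.Char_Poly" "HOL-Library.Multiset"
begin

definition simple_graph :: "'a set \<Rightarrow> 'a set set \<Rightarrow> bool" where
  "simple_graph V E \<longleftrightarrow> finite V \<and>
     (\<forall>e\<in>E. \<exists>u v. u \<noteq> v \<and> u \<in> V \<and> v \<in> V \<and> e = {u, v})"

definition line_graph_edges :: "'a set set \<Rightarrow> 'a set set set" where
  "line_graph_edges E = {{e, f} | e f. e \<in> E \<and> f \<in> E \<and> e \<noteq> f \<and> e \<inter> f \<noteq> {}}"

text \<open>An (arbitrary, fixed) enumeration of a finite set; spectra do not depend on it.\<close>
definition enum_set :: "'a set \<Rightarrow> 'a list" where
  "enum_set S = (SOME xs. distinct xs \<and> set xs = S)"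

definition adj_matrix :: "'a set \<Rightarrow> 'a set set \<Rightarrow> real mat" where
  "adj_matrix V E = (let xs = enum_set V in
     mat (length xs) (length xs) (\<lambda>(i, j). if {xs ! i, xs ! j} \<in> E then 1 else 0))"

definition degree :: "'a set set \<Rightarrow> 'a \<Rightarrow> nat" where
  "degree E v = card {e \<in> E. v \<in> e}"

definition signless_laplacian :: "'a set \<Rightarrow> 'a set set \<Rightarrow> real mat" where
  "signless_laplacian V E = (let xs = enum_set V in
     mat (length xs) (length xs) (\<lambda>(i, j).
        (if i = j then real (degree E (xs ! i)) else 0)
      + (if {xs ! i, xs ! j} \<in> E then 1 else 0)))"

definition eigenvalues :: "real mat \<Rightarrow> real multiset" where
  "eigenvalues A = proots (char_poly A)"

definition energy :: "'a set \<Rightarrow> 'a set set \<Rightarrow> real" where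
  "energy V E = (\<Sum>\<^sub># (image_mset abs (eigenvalues (adj_matrix V E))))"

definition neg_inertia :: "'a set \<Rightarrow> 'a set set \<Rightarrow> nat" where
  "neg_inertia V E = size (filter_mset (\<lambda>x. x < 0) (eigenvalues (adj_matrix V E)))"

text \<open>q k V E = k-th largest signless Laplacian eigenvalue (1-based): q_1 \<ge> ... \<ge> q_p.\<close>
definition q_eig :: "nat \<Rightarrow> 'a set \<Rightarrow> 'a set set \<Rightarrow> real" where
  "q_eig k V E = rev (sorted_list_of_multiset (eigenvalues (signless_laplacian V E))) ! (k - 1)"

definition adjacent :: "'a set set \<Rightarrow> 'a \<Rightarrow> 'a \<Rightarrow> bool" where
  "adjacent E u v \<longleftrightarrow> {u, v} \<in> E"

definition is_component :: "'a set \<Rightarrow> 'a set set \<Rightarrow> 'a set \<Rightarrow> bool" where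
  "is_component V E C \<longleftrightarrow> (\<exists>v\<in>V. C = {u \<in> V. (adjacent E)\<^sup>*\<^sup>* v u})"

definition induced_edges :: "'a set set \<Rightarrow> 'a set \<Rightarrow> 'a set set" where
  "induced_edges E C = {e \<in> E. e \<subseteq> C}"

definition bipartite :: "'a set \<Rightarrow> 'a set set \<Rightarrow> bool" where
  "bipartite V E \<longleftrightarrow> (\<exists>f :: 'a \<Rightarrow> bool. \<forall>u\<in>V. \<forall>v\<in>V. {u, v} \<in> E \<longrightarrow> f u \<noteq> f v)"

definition is_C4 :: "'a set \<Rightarrow> 'a set set \<Rightarrow> bool" where
  "is_C4 V E \<longleftrightarrow> (\<exists>a b c d. distinct [a, b, c, d] \<and> V = {a, b, c, d} \<and>
      E = {{a, b}, {b, c}, {c, d}, {d, a}})"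

end

(* The adjacency matrix of the line graph is B^T B - 2 I, where B is the vertex-edge
   incidence matrix of G, so all its eigenvalues are at least -2. As its trace is 0, the
   energy is twice the sum of the absolute values of the negative eigenvalues, hence at
   most 4 nu^-, with equality iff no eigenvalue lies in (-2, 0).
   Since B^T B and B B^T = Q share their nonzero eigenvalues, equality means that the
   signless Laplacian Q has no eigenvalue in (0, 2), which can be checked on each component
   separately (a component with at most one edge only has the eigenvalues 0 and 2).
   On a component with n vertices and m >= 2 edges, 0 is an eigenvalue of Q iff the
   component is bipartite, and then it is simple. If the remaining eigenvalues are all at
   least 2, comparing their sum 2 m with their sum of squares, sum_v d_v^2 + 2 m, forces
   m > n, except in the bipartite case m = n, which only leaves the 4-cycle. *)

theory Submission
  imports Defs "Jordan_Normal_Form.Schur_Decomposition"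
begin

section \<open>Traces and spectra of real symmetric matrices\<close>

lemma sum_squares_pos:
  fixes y :: "'b \<Rightarrow> real"
  assumes "finite I" and "i \<in> I" and "y i \<noteq> 0"
  shows "0 < (\<Sum>i\<in>I. (y i)^2)"
proof -
  have "0 < (y i)^2" using assms by simp
  also have "\<dots> \<le> (\<Sum>i\<in>I. (y i)^2)" by (rule member_le_sum) (use assms in auto)
  finally show ?thesis .
qed

lemma symmetric_mat_index:
  assumes "A \<in> carrier_mat n n" and "transpose_mat A = A" and "i < n" and "j < n"
  shows "A $$ (j, i) = A $$ (i, j)"
  using assms by (metis index_transpose_mat(1) carrier_matD)

definition trace_mat :: "'a::comm_ring_1 mat \<Rightarrow> 'a" where
  "trace_mat A = (\<Sum>i<dim_row A. A $$ (i, i))"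

lemma trace_mat_mult:
  assumes "A \<in> carrier_mat n m" and "B \<in> carrier_mat m n"
  shows "trace_mat (A * B) = (\<Sum>i<n. \<Sum>k<m. A $$ (i, k) * B $$ (k, i))"
  using assms by (auto simp: trace_mat_def scalar_prod_def lessThan_atLeast0 intro!: sum.cong)

lemma trace_mat_mult_comm:
  assumes "A \<in> carrier_mat n m" and "B \<in> carrier_mat m n"
  shows "trace_mat (A * B) = trace_mat (B * A)"
proof -
  have "(\<Sum>i<n. \<Sum>k<m. A $$ (i, k) * B $$ (k, i)) = (\<Sum>k<m. \<Sum>i<n. B $$ (k, i) * A $$ (i, k))"
    by (subst sum.swap) (simp add: mult.commute)
  then show ?thesis using assms by (simp add: trace_mat_mult)
qed

lemma trace_mat_similar:
  assumes "similar_mat_wit A B P Q"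
  shows "trace_mat A = trace_mat B"
proof -
  define n where "n = dim_row A"
  from similar_mat_witD[OF n_def assms] have carr: "B \<in> carrier_mat n n" "P \<in> carrier_mat n n"
      "Q \<in> carrier_mat n n" and QP: "Q * P = 1\<^sub>m n" and A: "A = P * B * Q"
    by auto
  have "trace_mat A = trace_mat (P * (B * Q))"
    using carr by (simp add: A assoc_mult_mat[of P n n B n Q n])
  also have "\<dots> = trace_mat (B * Q * P)"
    using carr by (intro trace_mat_mult_comm) auto
  also have "B * Q * P = B"
    using carr by (simp add: assoc_mult_mat[of B n n Q n P n] QP)
  finally show ?thesis .
qed

lemma trace_mat_upper_triangular:
  assumes B: "B \<in> carrier_mat n n" and ut: "upper_triangular B"
  shows "trace_mat B = sum_list (diag_mat B)"
    and "trace_mat (B * B) = (\<Sum>a\<leftarrow>diag_mat B. a^2)"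
proof -
  show "trace_mat B = sum_list (diag_mat B)"
    using B by (simp add: trace_mat_def diag_mat_def sum_list_sum_nth lessThan_atLeast0)
  have off_diag: "B $$ (i, k) * B $$ (k, i) = 0" if "i < n" "k < n" "k \<noteq> i" for i k
    using ut B that by (cases "k < i") (auto simp: upper_triangular_def)
  have "trace_mat (B * B) = (\<Sum>i<n. B $$ (i, i) * B $$ (i, i))"
    unfolding trace_mat_mult[OF B B]
    by (intro sum.cong refl, subst sum.remove[of _ "i" for i]) (auto simp: off_diag)
  then show "trace_mat (B * B) = (\<Sum>a\<leftarrow>diag_mat B. a^2)"
    using B by (simp add: diag_mat_def sum_list_sum_nth lessThan_atLeast0 power2_eq_square)
qed

lemma trace_mat_char_poly_linear_factors:
  fixes A :: "'a::conjugatable_ordered_field mat"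
  assumes A: "A \<in> carrier_mat n n" and cp: "char_poly A = (\<Prod>a\<leftarrow>as. [:-a, 1:])"
  shows "trace_mat A = sum_list as" and "trace_mat (A * A) = (\<Sum>a\<leftarrow>as. a^2)"
proof -
  obtain B P Q where "schur_decomposition A as = (B, P, Q)"
    by (cases "schur_decomposition A as") auto
  from schur_decomposition[OF A cp this] have sim: "similar_mat_wit A B P Q"
    and ut: "upper_triangular B" and diag: "diag_mat B = as" by auto
  have B: "B \<in> carrier_mat n n" using similar_mat_witD2[OF A sim] by auto
  show "trace_mat A = sum_list as"
    using trace_mat_similar[OF sim] trace_mat_upper_triangular(1)[OF B ut] diag by simp
  have "A ^\<^sub>m 2 = A * A" "B ^\<^sub>m 2 = B * B"
    using A B by (simp_all add: numeral_2_eq_2)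
  then show "trace_mat (A * A) = (\<Sum>a\<leftarrow>as. a^2)"
    using trace_mat_similar[OF similar_mat_wit_pow[OF sim, of 2]]
      trace_mat_upper_triangular(2)[OF B ut] diag by simp
qed

lemma eigenvalues_linear_factors:
  assumes "char_poly A = (\<Prod>a\<leftarrow>as. [:-a, 1:])"
  shows "eigenvalues A = mset as"
proof -
  have "0 \<notin> set (map (\<lambda>a. [:-a, 1:]) as)" by auto
  from proots_prod_list[OF this]
  have "proots (\<Prod>a\<leftarrow>as. [:-a, 1:]) = (\<Sum>a\<leftarrow>as. {#a#})" by (simp add: o_def)
  also have "\<dots> = mset as" by (induction as) auto
  finally show ?thesis unfolding eigenvalues_def assms .
qed

lemma real_symmetric_eigenvalue_real:
  fixes A :: "real mat"
  assumes A: "A \<in> carrier_mat n n" and sym: "transpose_mat A = A"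
    and ev: "eigenvalue (map_mat complex_of_real A) c"
  shows "Im c = 0"
proof -
  let ?A = "map_mat complex_of_real A"
  obtain v where v: "v \<in> carrier_vec n" "v \<noteq> 0\<^sub>v n" and eq: "?A *\<^sub>v v = c \<cdot>\<^sub>v v"
    using ev A unfolding eigenvalue_def eigenvector_def by auto
  have row: "(\<Sum>j<n. of_real (A $$ (i, j)) * v $ j) = c * v $ i" if i: "i < n" for i
  proof -
    have "(?A *\<^sub>v v) $ i = (\<Sum>j<n. of_real (A $$ (i, j)) * v $ j)"
      using i A v by (auto simp: scalar_prod_def lessThan_atLeast0 intro!: sum.cong)
    with eq i v show ?thesis by simp
  qed
  define s where "s = (\<Sum>i<n. \<Sum>j<n. cnj (v $ i) * of_real (A $$ (i, j)) * v $ j)"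
  define r where "r = (\<Sum>i<n. (cmod (v $ i))^2)"
  \<comment> \<open>The Hermitian form s = v* A v is real, and it equals c |v|^2.\<close>
  have "cnj s = (\<Sum>j<n. \<Sum>i<n. v $ i * of_real (A $$ (i, j)) * cnj (v $ j))"
    unfolding s_def by (subst sum.swap) simp
  also have "\<dots> = s"
    unfolding s_def
    by (intro sum.cong refl) (simp add: symmetric_mat_index[OF A sym] mult.commute mult.left_commute)
  finally have "cnj s = s" .
  then have "Im (cnj s) = Im s" by simp
  then have "Im s = 0" by simp
  have "s = (\<Sum>i<n. cnj (v $ i) * (c * v $ i))"
    by (simp add: s_def row sum_distrib_left[symmetric] mult.assoc)
  also have "\<dots> = (\<Sum>i<n. c * of_real ((cmod (v $ i))^2))"
    by (intro sum.cong refl) (simp add: complex_norm_square mult.commute mult.left_commute del: of_real_power)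
  also have "\<dots> = c * of_real r"
    by (simp add: r_def sum_distrib_left del: of_real_power)
  finally have s: "s = c * of_real r" .
  obtain i where "i < n" "v $ i \<noteq> 0"
    using v by (metis eq_vecI carrier_vecD index_zero_vec)
  then have "0 < r" unfolding r_def by (intro sum_squares_pos) auto
  with s \<open>Im s = 0\<close> show ?thesis by simp
qed

interpretation of_real_poly_hom: map_poly_inj_idom_hom "of_real :: real \<Rightarrow> complex" ..

lemma char_poly_real_symmetric_splits:
  fixes A :: "real mat"
  assumes A: "A \<in> carrier_mat n n" and sym: "transpose_mat A = A"
  obtains as where "char_poly A = (\<Prod>a\<leftarrow>as. [:-a, 1:])" and "length as = n"
proof -
  let ?A = "map_mat complex_of_real A"
  have A': "?A \<in> carrier_mat n n" using A by simp
  obtain cs where cs: "char_poly ?A = (\<Prod>c\<leftarrow>cs. [:-c, 1:])" "length cs = n"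
    using char_poly_factorized[OF A'] by blast
  have real: "of_real (Re c) = c" if "c \<in> set cs" for c
  proof -
    have "poly (char_poly ?A) c = 0"
      using that by (simp add: cs(1) poly_prod_list prod_list_zero_iff)
    then have "Im c = 0"
      using real_symmetric_eigenvalue_real[OF A sym] eigenvalue_root_char_poly[OF A'] by blast
    then show ?thesis by (simp add: complex_eq_iff)
  qed
  define as where "as = map Re cs"
  have "map_poly complex_of_real (char_poly A) = char_poly ?A"
    by (rule of_real_hom.char_poly_hom[OF A, symmetric])
  also have "\<dots> = map_poly complex_of_real (\<Prod>a\<leftarrow>as. [:-a, 1:])"
    unfolding cs(1) as_def of_real_poly_hom.hom_prod_list
    by (simp add: o_def real cong: map_cong)
  finally have "char_poly A = (\<Prod>a\<leftarrow>as. [:-a, 1:])" by simp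
  moreover have "length as = n" using cs(2) by (simp add: as_def)
  ultimately show ?thesis by (rule that)
qed

lemma real_symmetric_spectrum:
  fixes A :: "real mat"
  assumes A: "A \<in> carrier_mat n n" and sym: "transpose_mat A = A"
  shows "size (eigenvalues A) = n" and "sum_mset (eigenvalues A) = trace_mat A"
    and "(\<Sum>a\<in>#eigenvalues A. a^2) = trace_mat (A * A)"
proof -
  obtain as where cp: "char_poly A = (\<Prod>a\<leftarrow>as. [:-a, 1:])" and len: "length as = n"
    using char_poly_real_symmetric_splits[OF A sym] .
  note ev = eigenvalues_linear_factors[OF cp]
  show "size (eigenvalues A) = n" using ev len by simp
  show "sum_mset (eigenvalues A) = trace_mat A"
    using ev trace_mat_char_poly_linear_factors(1)[OF A cp] by (simp add: sum_mset_sum_list)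
  show "(\<Sum>a\<in>#eigenvalues A. a^2) = trace_mat (A * A)"
    using ev trace_mat_char_poly_linear_factors(2)[OF A cp]
    by (simp add: sum_mset_sum_list flip: mset_map)
qed

definition quad_form :: "real mat \<Rightarrow> (nat \<Rightarrow> real) \<Rightarrow> real" where
  "quad_form A y = (\<Sum>i<dim_row A. \<Sum>j<dim_row A. y i * A $$ (i, j) * y j)"

lemma eigenvalue_quad_form:
  assumes A: "A \<in> carrier_mat n n" and "eigenvalue A b"
  obtains y where "\<exists>i<n. y i \<noteq> 0" and "quad_form A y = b * (\<Sum>i<n. (y i)^2)"
proof -
  obtain w where w: "w \<in> carrier_vec n" "w \<noteq> 0\<^sub>v n" and ev: "A *\<^sub>v w = b \<cdot>\<^sub>v w"
    using assms unfolding eigenvalue_def eigenvector_def by auto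
  have row: "(\<Sum>j<n. A $$ (i, j) * w $ j) = b * w $ i" if i: "i < n" for i
  proof -
    have "(A *\<^sub>v w) $ i = (\<Sum>j<n. A $$ (i, j) * w $ j)"
      using i A w by (auto simp: scalar_prod_def lessThan_atLeast0 intro!: sum.cong)
    with ev i w show ?thesis by simp
  qed
  have "quad_form A (($) w) = (\<Sum>i<n. w $ i * (\<Sum>j<n. A $$ (i, j) * w $ j))"
    using A by (simp add: quad_form_def sum_distrib_left mult.assoc)
  also have "\<dots> = b * (\<Sum>i<n. (w $ i)^2)"
    by (simp add: row sum_distrib_left power2_eq_square mult.left_commute)
  moreover obtain i where "i < n" "w $ i \<noteq> 0"
    using w by (metis eq_vecI carrier_vecD index_zero_vec)
  ultimately show ?thesis by (intro that[of "($) w"]) auto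
qed

lemma poly_linear_factors_at_0:
  "(-1)^length as * poly (\<Prod>a\<leftarrow>as. [:-a, 1:]) 0 = (prod_list as :: 'a::comm_ring_1)"
  by (induction as) (simp_all add: algebra_simps)

lemma char_poly_at_0_psd:
  fixes M :: "real mat"
  assumes M: "M \<in> carrier_mat m m" and sym: "transpose_mat M = M"
    and psd: "\<And>y. 0 \<le> quad_form M y"
  shows "0 \<le> (-1)^m * poly (char_poly M) 0"
    and "(\<And>y. quad_form M y = 0 \<Longrightarrow> \<forall>k<m. y k = 0) \<Longrightarrow> 0 < (-1)^m * poly (char_poly M) 0"
proof -
  obtain as where cp: "char_poly M = (\<Prod>a\<leftarrow>as. [:-a, 1:])" and len: "length as = m"
    using char_poly_real_symmetric_splits[OF M sym] .
  have prod: "(-1)^m * poly (char_poly M) 0 = prod_list as"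
    using poly_linear_factors_at_0[of as] by (simp add: cp len)
  have root: "0 \<le> a \<and> ((\<forall>y. quad_form M y = 0 \<longrightarrow> (\<forall>k<m. y k = 0)) \<longrightarrow> a \<noteq> 0)"
    if "a \<in> set as" for a
  proof -
    have "eigenvalue M a"
      using that eigenvalue_root_char_poly[OF M] by (simp add: cp poly_prod_list prod_list_zero_iff)
    then obtain y where y: "\<exists>i<m. y i \<noteq> 0" and q: "quad_form M y = a * (\<Sum>i<m. (y i)^2)"
      by (rule eigenvalue_quad_form[OF M])
    have "0 < (\<Sum>i<m. (y i)^2)" using y sum_squares_pos[of "{..<m}" _ y] by auto
    then show ?thesis using psd[of y] q y by (auto simp: zero_le_mult_iff)
  qed
  show "0 \<le> (-1)^m * poly (char_poly M) 0"
    unfolding prod using root by (intro prod_list_nonneg) auto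
  show "0 < (-1)^m * poly (char_poly M) 0" if "\<And>y. quad_form M y = 0 \<Longrightarrow> \<forall>k<m. y k = 0"
    unfolding prod using root that by (induction as) (auto simp: less_le)
qed

lemma quad_form_mat_delete:
  assumes A: "A \<in> carrier_mat (Suc m) (Suc m)" and i: "i < Suc m"
  shows "quad_form (mat_delete A i i) w =
    quad_form A (\<lambda>k. if k = i then 0 else w (delete_index i k))"
proof -
  let ?y = "\<lambda>k. if k = i then 0 else w (delete_index i k)"
  have bij: "bij_betw (insert_index i) {..<m} ({..<Suc m} - {i})"
    using insert_index_inj_on[of i] insert_index_image[OF i]
    by (simp add: bij_betw_def lessThan_atLeast0)
  have drop: "(\<Sum>k<Suc m. g k) = (\<Sum>k<m. g (insert_index i k))" if "g i = 0" for g :: "nat \<Rightarrow> real"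
    using sum.remove[of "{..<Suc m}" i g] sum.reindex_bij_betw[OF bij, of g] i that by simp
  have "quad_form A ?y = (\<Sum>k<Suc m. \<Sum>l<Suc m. ?y k * A $$ (k, l) * ?y l)"
    using A by (simp add: quad_form_def)
  also have "\<dots> = (\<Sum>k<m. \<Sum>l<Suc m. ?y (insert_index i k) * A $$ (insert_index i k, l) * ?y l)"
    by (rule drop) simp
  also have "\<dots> = (\<Sum>k<m. \<Sum>l<m. ?y (insert_index i k) *
      A $$ (insert_index i k, insert_index i l) * ?y (insert_index i l))"
    by (intro sum.cong refl drop) simp
  also have "\<dots> = quad_form (mat_delete A i i) w"
    using A by (simp add: quad_form_def mat_delete_def) (simp add: insert_index_def)
  finally show ?thesis ..
qed

lemma mat_delete_symmetric:
  assumes A: "A \<in> carrier_mat n n" and sym: "transpose_mat A = A"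
  shows "transpose_mat (mat_delete A i i) = mat_delete A i i"
proof (rule eq_matI)
  fix k l assume kl: "k < dim_row (mat_delete A i i)" "l < dim_col (mat_delete A i i)"
  then have "insert_index i k < n" "insert_index i l < n"
    using A by (auto simp: insert_index_def)
  with kl show "transpose_mat (mat_delete A i i) $$ (k, l) = mat_delete A i i $$ (k, l)"
    using A by (simp add: mat_delete_def symmetric_mat_index[OF A sym])
qed (use A in auto)

lemma char_poly_minor_at_0_psd:
  fixes A :: "real mat"
  assumes A: "A \<in> carrier_mat (Suc m) (Suc m)" and sym: "transpose_mat A = A"
    and psd: "\<And>y. 0 \<le> quad_form A y" and i: "i < Suc m"
  shows "0 \<le> (-1)^m * poly (char_poly (mat_delete A i i)) 0"
    and "(\<And>y. y i = 0 \<Longrightarrow> quad_form A y = 0 \<Longrightarrow> \<forall>k<Suc m. y k = 0) \<Longrightarrow>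
      0 < (-1)^m * poly (char_poly (mat_delete A i i)) 0"
proof -
  have minor: "mat_delete A i i \<in> carrier_mat m m" "transpose_mat (mat_delete A i i) = mat_delete A i i"
    using mat_delete_carrier[OF A] mat_delete_symmetric[OF A sym] by auto
  note minor_quad_form = quad_form_mat_delete[OF A i]
  show "0 \<le> (-1)^m * poly (char_poly (mat_delete A i i)) 0"
    using char_poly_at_0_psd(1)[OF minor] psd by (simp add: minor_quad_form)
  assume definite: "\<And>y. y i = 0 \<Longrightarrow> quad_form A y = 0 \<Longrightarrow> \<forall>k<Suc m. y k = 0"
  show "0 < (-1)^m * poly (char_poly (mat_delete A i i)) 0"
  proof (rule char_poly_at_0_psd(2)[OF minor])
    show "0 \<le> quad_form (mat_delete A i i) y" for y using psd by (simp add: minor_quad_form)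
    fix y assume "quad_form (mat_delete A i i) y = 0"
    then have zero: "\<forall>k<Suc m. (if k = i then 0 else y (delete_index i k)) = 0"
      by (intro definite) (simp_all add: minor_quad_form)
    show "\<forall>k<m. y k = 0"
    proof (intro allI impI)
      fix k assume "k < m"
      then have "insert_index i k < Suc m" by (simp add: insert_index_def)
      then show "y k = 0" using zero by fastforce
    qed
  qed
qed

lemma count_eigenvalue_0_le_1:
  fixes A :: "real mat"
  assumes A: "A \<in> carrier_mat n n" and sym: "transpose_mat A = A"
    and psd: "\<And>y. 0 \<le> quad_form A y"
    and i0: "i0 < n" and definite: "\<And>y. y i0 = 0 \<Longrightarrow> quad_form A y = 0 \<Longrightarrow> \<forall>k<n. y k = 0"
  shows "count (eigenvalues A) 0 \<le> 1"
proof (rule ccontr)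
  assume "\<not> ?thesis"
  obtain m where n: "n = Suc m" using i0 by (cases n) auto
  let ?p = "char_poly A" and ?P = "\<lambda>i. (-1)^m * poly (char_poly (mat_delete A i i)) 0"
  have "?p \<noteq> 0" using degree_monic_char_poly[OF A] by auto
  with \<open>\<not> ?thesis\<close> have "2 \<le> Polynomial.order 0 ?p" by (simp add: eigenvalues_def count_proots)
  \<comment> \<open>0 is a multiple root of the characteristic polynomial, hence a root of its derivative,
    which is the sum of the characteristic polynomials of the principal minors.\<close>
  then have "poly (pderiv ?p) 0 = 0"
    using order_pderiv[OF \<open>?p \<noteq> 0\<close>] order_root[of ?p 0] order_root[of "pderiv ?p" 0] by force
  then have sum0: "(\<Sum>i<n. ?P i) = 0"
    by (simp add: pderiv_char_poly[OF A] poly_sum sum_distrib_left[symmetric])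
  note minor = char_poly_minor_at_0_psd[OF A[unfolded n] sym psd]
  have "0 < ?P i0" using i0 definite n by (intro minor(2)) auto
  moreover have "0 \<le> (\<Sum>i\<in>{..<n} - {i0}. ?P i)" using minor(1) n by (intro sum_nonneg) auto
  moreover have "(\<Sum>i<n. ?P i) = ?P i0 + (\<Sum>i\<in>{..<n} - {i0}. ?P i)"
    by (rule sum.remove) (use i0 in auto)
  ultimately show False using sum0 by linarith
qed

section \<open>Matrices indexed by a finite set\<close>

lemma enum_set:
  assumes "finite S"
  shows "distinct (enum_set S)" and "set (enum_set S) = S" and "length (enum_set S) = card S"
proof -
  have "\<exists>xs. distinct xs \<and> set xs = S" using finite_distinct_list[OF assms] by blast
  then have "distinct (enum_set S) \<and> set (enum_set S) = S"
    unfolding enum_set_def by (rule someI_ex)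
  then show "distinct (enum_set S)" "set (enum_set S) = S" by auto
  then show "length (enum_set S) = card S" by (metis distinct_card)
qed

lemma bij_betw_enum_set: "finite S \<Longrightarrow> bij_betw ((!) (enum_set S)) {..<card S} S"
  using enum_set[of S] by (intro bij_betw_nth) (auto simp: lessThan_atLeast0)

lemma sum_enum_set: "finite S \<Longrightarrow> (\<Sum>i<card S. g (enum_set S ! i)) = (\<Sum>v\<in>S. g v)"
  using sum.reindex_bij_betw[OF bij_betw_enum_set] .

definition enum_index :: "'a set \<Rightarrow> 'a \<Rightarrow> nat" where
  "enum_index S v = inv_into {..<card S} ((!) (enum_set S)) v"

lemma enum_index:
  assumes "finite S"
  shows "\<And>v. v \<in> S \<Longrightarrow> enum_index S v < card S"
    and "\<And>v. v \<in> S \<Longrightarrow> enum_set S ! enum_index S v = v"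
    and "\<And>i. i < card S \<Longrightarrow> enum_index S (enum_set S ! i) = i"
    and "\<And>i. i < card S \<Longrightarrow> enum_set S ! i \<in> S"
  using bij_betw_enum_set[OF assms] unfolding enum_index_def
  by (auto simp: bij_betw_inv_into_right inv_into_f_f bij_betw_def inv_into_into[of _ _ "{..<card S}", simplified])

definition indexed_mat :: "'a set \<Rightarrow> ('a \<Rightarrow> 'a \<Rightarrow> real) \<Rightarrow> real mat" where
  "indexed_mat S f = (let xs = enum_set S in mat (length xs) (length xs) (\<lambda>(i, j). f (xs ! i) (xs ! j)))"

lemma indexed_mat_carrier: "finite S \<Longrightarrow> indexed_mat S f \<in> carrier_mat (card S) (card S)"
  by (simp add: indexed_mat_def Let_def enum_set(3))

lemma indexed_mat_index:
  "finite S \<Longrightarrow> i < card S \<Longrightarrow> j < card S \<Longrightarrow>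
    indexed_mat S f $$ (i, j) = f (enum_set S ! i) (enum_set S ! j)"
  by (simp add: indexed_mat_def Let_def enum_set(3))

lemma indexed_mat_symmetric:
  assumes S: "finite S" and f: "\<And>u v. u \<in> S \<Longrightarrow> v \<in> S \<Longrightarrow> f u v = f v u"
  shows "transpose_mat (indexed_mat S f) = indexed_mat S f"
  using indexed_mat_carrier[OF S, of f]
  by (intro eq_matI) (auto simp: indexed_mat_index[OF S] f enum_index(4)[OF S])

lemma mult_indexed_mat_vec:
  assumes S: "finite S" and i: "i < card S" and w: "w \<in> carrier_vec (card S)"
  shows "(indexed_mat S f *\<^sub>v w) $ i = (\<Sum>u\<in>S. f (enum_set S ! i) u * w $ enum_index S u)"
proof -
  have "(indexed_mat S f *\<^sub>v w) $ i = (\<Sum>j<card S. f (enum_set S ! i) (enum_set S ! j) * w $ j)"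
    using S i w indexed_mat_carrier[OF S, of f]
    by (auto simp: scalar_prod_def lessThan_atLeast0 indexed_mat_index intro!: sum.cong)
  also have "\<dots> = (\<Sum>u\<in>S. f (enum_set S ! i) u * w $ enum_index S u)"
    using sum_enum_set[OF S, of "\<lambda>u. f (enum_set S ! i) u * w $ enum_index S u"]
    by (simp add: enum_index(3)[OF S])
  finally show ?thesis .
qed

definition fun_eigenvalue :: "'a set \<Rightarrow> (('a \<Rightarrow> real) \<Rightarrow> 'a \<Rightarrow> real) \<Rightarrow> real \<Rightarrow> bool" where
  "fun_eigenvalue S T \<mu> \<longleftrightarrow> (\<exists>x. (\<exists>v\<in>S. x v \<noteq> 0) \<and> (\<forall>v\<in>S. T x v = \<mu> * x v))"

lemma fun_eigenvalue_if_eigenvalue_indexed_mat: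
  assumes S: "finite S" and "eigenvalue (indexed_mat S f) \<mu>"
  shows "fun_eigenvalue S (\<lambda>x v. \<Sum>u\<in>S. f v u * x u) \<mu>"
proof -
  have A: "indexed_mat S f \<in> carrier_mat (card S) (card S)" by (rule indexed_mat_carrier[OF S])
  obtain w where w: "w \<in> carrier_vec (card S)" "w \<noteq> 0\<^sub>v (card S)"
    and ev: "indexed_mat S f *\<^sub>v w = \<mu> \<cdot>\<^sub>v w"
    using assms(2) A unfolding eigenvalue_def eigenvector_def by auto
  define x where "x v = w $ enum_index S v" for v
  have "(\<Sum>u\<in>S. f v u * x u) = \<mu> * x v" if v: "v \<in> S" for v
  proof -
    have "(indexed_mat S f *\<^sub>v w) $ enum_index S v = (\<mu> \<cdot>\<^sub>v w) $ enum_index S v" by (simp add: ev)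
    then show ?thesis
      using v w by (simp add: mult_indexed_mat_vec[OF S] enum_index[OF S] x_def)
  qed
  moreover obtain k where "k < card S" "w $ k \<noteq> 0"
    using w by (metis eq_vecI carrier_vecD index_zero_vec)
  then have "enum_set S ! k \<in> S" "x (enum_set S ! k) \<noteq> 0" by (simp_all add: x_def enum_index[OF S])
  ultimately show ?thesis unfolding fun_eigenvalue_def by blast
qed

lemma eigenvalue_indexed_mat_if_fun_eigenvalue:
  assumes S: "finite S" and "fun_eigenvalue S (\<lambda>x v. \<Sum>u\<in>S. f v u * x u) \<mu>"
  shows "eigenvalue (indexed_mat S f) \<mu>"
proof -
  let ?A = "indexed_mat S f" and ?n = "card S" and ?xs = "enum_set S"
  have A: "?A \<in> carrier_mat ?n ?n" by (rule indexed_mat_carrier[OF S])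
  obtain x v where v: "v \<in> S" "x v \<noteq> 0" and eq: "\<forall>v\<in>S. (\<Sum>u\<in>S. f v u * x u) = \<mu> * x v"
    using assms(2) unfolding fun_eigenvalue_def by blast
  define w where "w = vec ?n (\<lambda>i. x (?xs ! i))"
  have w: "w \<in> carrier_vec ?n" by (simp add: w_def)
  have "w $ enum_index S v \<noteq> 0" using v by (simp add: w_def enum_index[OF S])
  then have "w \<noteq> 0\<^sub>v ?n" using enum_index(1)[OF S v(1)] by auto
  moreover have "?A *\<^sub>v w = \<mu> \<cdot>\<^sub>v w"
  proof (rule eq_vecI)
    fix i assume "i < dim_vec (\<mu> \<cdot>\<^sub>v w)"
    then have i: "i < ?n" by (simp add: w_def)
    have "(?A *\<^sub>v w) $ i = (\<Sum>u\<in>S. f (?xs ! i) u * x u)"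
      using i w by (simp add: mult_indexed_mat_vec[OF S] w_def enum_index[OF S])
    also have "\<dots> = (\<mu> \<cdot>\<^sub>v w) $ i"
      using i eq enum_index(4)[OF S i] by (simp add: w_def)
    finally show "(?A *\<^sub>v w) $ i = (\<mu> \<cdot>\<^sub>v w) $ i" .
  qed (use A w in auto)
  ultimately show ?thesis
    using A w unfolding eigenvalue_def eigenvector_def by auto
qed

lemma eigenvalues_indexed_mat:
  assumes S: "finite S"
  shows "\<mu> \<in># eigenvalues (indexed_mat S f) \<longleftrightarrow>
    fun_eigenvalue S (\<lambda>x v. \<Sum>u\<in>S. f v u * x u) \<mu>"
proof -
  have A: "indexed_mat S f \<in> carrier_mat (card S) (card S)" by (rule indexed_mat_carrier[OF S])
  have "char_poly (indexed_mat S f) \<noteq> 0" using degree_monic_char_poly[OF A] by auto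
  then have "\<mu> \<in># eigenvalues (indexed_mat S f) \<longleftrightarrow> eigenvalue (indexed_mat S f) \<mu>"
    by (simp add: eigenvalues_def eigenvalue_root_char_poly[OF A])
  then show ?thesis
    using fun_eigenvalue_if_eigenvalue_indexed_mat[OF S] eigenvalue_indexed_mat_if_fun_eigenvalue[OF S]
    by blast
qed

lemma indexed_mat_spectrum:
  assumes S: "finite S" and f: "\<And>u v. u \<in> S \<Longrightarrow> v \<in> S \<Longrightarrow> f u v = f v u"
  shows "size (eigenvalues (indexed_mat S f)) = card S"
    and "sum_mset (eigenvalues (indexed_mat S f)) = (\<Sum>v\<in>S. f v v)"
    and "(\<Sum>a\<in>#eigenvalues (indexed_mat S f). a^2) = (\<Sum>v\<in>S. \<Sum>u\<in>S. (f v u)^2)"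
proof -
  let ?A = "indexed_mat S f" and ?n = "card S" and ?xs = "enum_set S"
  note A = indexed_mat_carrier[OF S, of f]
  note spec = real_symmetric_spectrum[OF A indexed_mat_symmetric[OF S f]]
  show "size (eigenvalues ?A) = ?n" by (rule spec(1))
  show "sum_mset (eigenvalues ?A) = (\<Sum>v\<in>S. f v v)"
    using A sum_enum_set[OF S, of "\<lambda>v. f v v"]
    by (simp add: spec(2) trace_mat_def indexed_mat_index[OF S])
  have "trace_mat (?A * ?A) = (\<Sum>i<?n. \<Sum>j<?n. (f (?xs ! i) (?xs ! j))^2)"
    using A by (simp add: trace_mat_mult indexed_mat_index[OF S] f enum_index(4)[OF S] power2_eq_square)
  also have "\<dots> = (\<Sum>i<?n. \<Sum>u\<in>S. (f (?xs ! i) u)^2)"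
    by (rule sum.cong[OF refl]) (rule sum_enum_set[OF S])
  also have "\<dots> = (\<Sum>v\<in>S. \<Sum>u\<in>S. (f v u)^2)" by (rule sum_enum_set[OF S])
  finally show "(\<Sum>a\<in>#eigenvalues ?A. a^2) = (\<Sum>v\<in>S. \<Sum>u\<in>S. (f v u)^2)"
    by (simp add: spec(3))
qed

lemma count_eigenvalue_0_indexed_mat_le_1:
  assumes S: "finite S" and f: "\<And>u v. u \<in> S \<Longrightarrow> v \<in> S \<Longrightarrow> f u v = f v u"
    and psd: "\<And>x. 0 \<le> (\<Sum>v\<in>S. \<Sum>u\<in>S. x v * f v u * x u)"
    and v0: "v0 \<in> S"
    and definite: "\<And>x. x v0 = 0 \<Longrightarrow> (\<Sum>v\<in>S. \<Sum>u\<in>S. x v * f v u * x u) = 0 \<Longrightarrow>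
      \<forall>v\<in>S. x v = 0"
  shows "count (eigenvalues (indexed_mat S f)) 0 \<le> 1"
proof -
  let ?A = "indexed_mat S f" and ?n = "card S" and ?xs = "enum_set S"
  note A = indexed_mat_carrier[OF S, of f]
  have quad: "quad_form ?A y = (\<Sum>v\<in>S. \<Sum>u\<in>S. y (enum_index S v) * f v u * y (enum_index S u))" for y
    using A by (simp add: quad_form_def indexed_mat_index[OF S] flip: sum_enum_set[OF S])
      (simp add: enum_index(3)[OF S])
  show ?thesis
  proof (rule count_eigenvalue_0_le_1[OF A indexed_mat_symmetric[OF S f]])
    show "0 \<le> quad_form ?A y" for y by (simp add: quad psd)
    show "enum_index S v0 < ?n" by (rule enum_index(1)[OF S v0])
    fix y assume "y (enum_index S v0) = 0" and "quad_form ?A y = 0"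
    then have "\<forall>v\<in>S. y (enum_index S v) = 0" by (intro definite) (simp_all add: quad)
    then show "\<forall>k<?n. y k = 0" using enum_index[OF S] by metis
  qed
qed

lemma fun_eigenvalue_nonneg:
  assumes S: "finite S" and psd: "\<And>x. 0 \<le> (\<Sum>v\<in>S. x v * T x v)" and "fun_eigenvalue S T \<mu>"
  shows "0 \<le> \<mu>"
proof -
  obtain x v where v: "v \<in> S" "x v \<noteq> 0" and eq: "\<forall>v\<in>S. T x v = \<mu> * x v"
    using assms(3) unfolding fun_eigenvalue_def by blast
  have "(\<Sum>v\<in>S. x v * T x v) = \<mu> * (\<Sum>v\<in>S. (x v)^2)"
    using eq by (simp add: sum_distrib_left power2_eq_square mult.left_commute)
  moreover have "0 < (\<Sum>v\<in>S. (x v)^2)" by (rule sum_squares_pos) fact+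
  ultimately show ?thesis using psd[of x] by (simp add: zero_le_mult_iff)
qed

section \<open>Incidence operators of a simple graph\<close>

lemma simple_graph_edgeE:
  assumes "simple_graph V E" and "e \<in> E"
  obtains u v where "u \<noteq> v" "u \<in> V" "v \<in> V" "e = {u, v}"
  using assms unfolding simple_graph_def by blast

lemma simple_graph_edge_subset: "simple_graph V E \<Longrightarrow> e \<in> E \<Longrightarrow> e \<subseteq> V"
  by (erule simple_graph_edgeE) auto

lemma simple_graph_finite_edges: "simple_graph V E \<Longrightarrow> finite E"
proof -
  assume G: "simple_graph V E"
  then have "E \<subseteq> Pow V" using simple_graph_edge_subset by blast
  moreover have "finite V" using G by (simp add: simple_graph_def)
  ultimately show ?thesis by (meson finite_Pow_iff finite_subset)
qed

lemma simple_graph_card_edge: "simple_graph V E \<Longrightarrow> e \<in> E \<Longrightarrow> card e = 2"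
  by (erule simple_graph_edgeE) auto

lemma simple_graph_pair: "simple_graph V E \<Longrightarrow> {u, v} \<in> E \<Longrightarrow> u \<noteq> v \<and> u \<in> V \<and> v \<in> V"
  by (erule simple_graph_edgeE) (auto simp: doubleton_eq_iff)

definition neighbours :: "'a set set \<Rightarrow> 'a \<Rightarrow> 'a set" where
  "neighbours E v = {u. {v, u} \<in> E}"

lemma neighbours_subset: "simple_graph V E \<Longrightarrow> neighbours E v \<subseteq> V - {v}"
  unfolding neighbours_def using simple_graph_pair by fastforce

lemma bij_betw_neighbours_edges:
  assumes G: "simple_graph V E"
  shows "bij_betw (\<lambda>u. {v, u}) (neighbours E v) {e\<in>E. v \<in> e}"
proof (rule bij_betw_imageI)
  have ne: "u \<noteq> v" if "u \<in> neighbours E v" for u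
    using that neighbours_subset[OF G, of v] by blast
  show "inj_on (\<lambda>u. {v, u}) (neighbours E v)"
  proof (rule inj_onI)
    fix u u' assume "u \<in> neighbours E v" "u' \<in> neighbours E v" "{v, u} = {v, u'}"
    with ne show "u = u'" by (auto simp: doubleton_eq_iff)
  qed
  show "(\<lambda>u. {v, u}) ` neighbours E v = {e\<in>E. v \<in> e}"
  proof (intro equalityI subsetI)
    fix e assume e: "e \<in> {e\<in>E. v \<in> e}"
    then obtain a b where ab: "e = {a, b}" using simple_graph_edgeE[OF G] by blast
    have "e = {v, b} \<or> e = {v, a}" using e ab by auto
    then show "e \<in> (\<lambda>u. {v, u}) ` neighbours E v"
      using e by (auto simp: neighbours_def)
  qed (auto simp: neighbours_def)
qed

lemma degree_eq_card_neighbours: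
  assumes "simple_graph V E"
  shows "degree E v = card (neighbours E v)"
  unfolding degree_def using bij_betw_same_card[OF bij_betw_neighbours_edges[OF assms]] by simp

lemma sum_edges_at:
  "simple_graph V E \<Longrightarrow> (\<Sum>e\<in>{e\<in>E. v \<in> e}. h e) = (\<Sum>u\<in>neighbours E v. h {v, u})"
  using sum.reindex_bij_betw[OF bij_betw_neighbours_edges, of V E h v] by simp

lemma sum_incidences_swap:
  assumes G: "simple_graph V E"
  shows "(\<Sum>e\<in>E. \<Sum>v\<in>e. h e v) = (\<Sum>v\<in>V. \<Sum>e\<in>{e\<in>E. v \<in> e}. h e v)"
proof -
  have V: "finite V" using G by (simp add: simple_graph_def)
  have "(\<Sum>e\<in>E. \<Sum>v\<in>e. h e v) = (\<Sum>e\<in>E. \<Sum>v\<in>V. if v \<in> e then h e v else 0)"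
  proof (rule sum.cong[OF refl])
    fix e assume "e \<in> E"
    then have "{v\<in>V. v \<in> e} = e" using simple_graph_edge_subset[OF G] by blast
    then show "(\<Sum>v\<in>e. h e v) = (\<Sum>v\<in>V. if v \<in> e then h e v else 0)"
      using sum.inter_filter[OF V, of "h e" "\<lambda>v. v \<in> e"] by simp
  qed
  also have "\<dots> = (\<Sum>v\<in>V. \<Sum>e\<in>E. if v \<in> e then h e v else 0)" by (rule sum.swap)
  also have "\<dots> = (\<Sum>v\<in>V. \<Sum>e\<in>{e\<in>E. v \<in> e}. h e v)"
    using simple_graph_finite_edges[OF G] by (simp add: sum.inter_filter)
  finally show ?thesis .
qed

lemma sum_degree:
  assumes "simple_graph V E"
  shows "(\<Sum>v\<in>V. real (degree E v)) = 2 * real (card E)"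
proof -
  have "(\<Sum>v\<in>V. real (degree E v)) = (\<Sum>v\<in>V. \<Sum>e\<in>{e\<in>E. v \<in> e}. 1)"
    by (simp add: degree_def)
  also have "\<dots> = (\<Sum>e\<in>E. \<Sum>v\<in>e. 1)" by (rule sum_incidences_swap[OF assms, symmetric])
  also have "\<dots> = (\<Sum>e\<in>E. 2)" by (simp add: simple_graph_card_edge[OF assms])
  finally show ?thesis by simp
qed

text \<open>With B the vertex-edge incidence matrix, edge_sum x = B^T x and vertex_sum E y = B y,
  so that Q = B B^T and the adjacency matrix of the line graph is B^T B - 2 I.\<close>
definition edge_sum :: "('a \<Rightarrow> real) \<Rightarrow> 'a set \<Rightarrow> real" where
  "edge_sum x e = (\<Sum>v\<in>e. x v)"

definition vertex_sum :: "'a set set \<Rightarrow> ('a set \<Rightarrow> real) \<Rightarrow> 'a \<Rightarrow> real" where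
  "vertex_sum E y v = (\<Sum>e\<in>{e\<in>E. v \<in> e}. y e)"

lemma edge_sum_pair: "u \<noteq> v \<Longrightarrow> edge_sum x {u, v} = x u + x v"
  by (simp add: edge_sum_def)

lemma incidence_adjoint:
  assumes "simple_graph V E"
  shows "(\<Sum>e\<in>E. y e * edge_sum x e) = (\<Sum>v\<in>V. x v * vertex_sum E y v)"
  using sum_incidences_swap[OF assms, of "\<lambda>e v. y e * x v"]
  by (simp add: edge_sum_def vertex_sum_def sum_distrib_left sum_distrib_right mult.commute)

definition adjacency_fun :: "'a set set \<Rightarrow> 'a \<Rightarrow> 'a \<Rightarrow> real" where
  "adjacency_fun E a b = (if {a, b} \<in> E then 1 else 0)"

lemma adj_matrix_indexed: "adj_matrix V E = indexed_mat V (adjacency_fun E)"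
  by (simp add: adj_matrix_def indexed_mat_def adjacency_fun_def)

lemma signless_laplacian_indexed:
  assumes V: "finite V"
  shows "signless_laplacian V E =
    indexed_mat V (\<lambda>a b. (if a = b then real (degree E a) else 0) + adjacency_fun E a b)"
proof -
  let ?xs = "enum_set V"
  have "i = j \<longleftrightarrow> ?xs ! i = ?xs ! j" if "i < length ?xs" "j < length ?xs" for i j
    using that enum_set(1)[OF V] by (simp add: nth_eq_iff_index_eq)
  then show ?thesis
    by (auto intro!: eq_matI simp: signless_laplacian_def indexed_mat_def Let_def adjacency_fun_def)
qed

lemma signless_laplacian_apply:
  assumes G: "simple_graph V E" and v: "v \<in> V"
  shows "(\<Sum>u\<in>V. ((if v = u then real (degree E v) else 0) + adjacency_fun E v u) * x u)
    = vertex_sum E (edge_sum x) v"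
proof -
  have V: "finite V" using G by (simp add: simple_graph_def)
  have nb: "neighbours E v \<subseteq> V - {v}" by (rule neighbours_subset[OF G])
  have summand: "((if v = u then real (degree E v) else 0) + adjacency_fun E v u) * x u
      = (if u = v then real (degree E v) * x v else 0) + (if u \<in> neighbours E v then x u else 0)" for u
    using simple_graph_pair[OF G, of v v] by (auto simp: adjacency_fun_def neighbours_def)
  have "{u\<in>V. u \<in> neighbours E v} = neighbours E v" using nb by blast
  then have "(\<Sum>u\<in>V. ((if v = u then real (degree E v) else 0) + adjacency_fun E v u) * x u)
      = real (degree E v) * x v + (\<Sum>u\<in>neighbours E v. x u)"
    unfolding summand sum.distrib using V v by (simp add: sum.delta sum.inter_filter[symmetric])
  also have "real (degree E v) * x v + (\<Sum>u\<in>neighbours E v. x u) = (\<Sum>u\<in>neighbours E v. x v + x u)"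
    by (simp add: sum.distrib degree_eq_card_neighbours[OF G])
  also have "\<dots> = vertex_sum E (edge_sum x) v"
  proof -
    have "edge_sum x {v, u} = x v + x u" if "u \<in> neighbours E v" for u
      using that nb by (intro edge_sum_pair) auto
    then show ?thesis by (simp add: vertex_sum_def sum_edges_at[OF G])
  qed
  finally show ?thesis .
qed

lemma line_graph_edge_iff:
  assumes "e \<in> E" and "f \<in> E"
  shows "{e, f} \<in> line_graph_edges E \<longleftrightarrow> e \<noteq> f \<and> e \<inter> f \<noteq> {}"
proof
  assume "{e, f} \<in> line_graph_edges E"
  then obtain e' f' where ef: "{e, f} = {e', f'}" and "e' \<noteq> f'" "e' \<inter> f' \<noteq> {}"
    unfolding line_graph_edges_def by blast
  moreover from ef have "(e = e' \<and> f = f') \<or> (e = f' \<and> f = e')" by (simp add: doubleton_eq_iff)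
  ultimately show "e \<noteq> f \<and> e \<inter> f \<noteq> {}" by (auto simp: Int_commute)
next
  assume "e \<noteq> f \<and> e \<inter> f \<noteq> {}"
  with assms show "{e, f} \<in> line_graph_edges E" unfolding line_graph_edges_def by blast
qed

lemma adjacency_fun_line_graph_self: "adjacency_fun (line_graph_edges E) e e = 0"
  by (auto simp: adjacency_fun_def line_graph_edges_def doubleton_eq_iff)

lemma card_inter_edges:
  assumes G: "simple_graph V E" and e: "e \<in> E" and f: "f \<in> E" and "e \<noteq> f"
  shows "card (e \<inter> f) = (if e \<inter> f = {} then 0 else 1)"
proof -
  have card: "card e = 2" "card f = 2" using simple_graph_card_edge[OF G] e f by auto
  then have fin: "finite e" "finite f" by (auto intro: card_ge_0_finite)
  have "e \<inter> f \<noteq> e"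
  proof
    assume "e \<inter> f = e"
    then have "e \<subseteq> f" by blast
    with card fin have "e = f" by (metis card_subset_eq)
    with \<open>e \<noteq> f\<close> show False ..
  qed
  then have "card (e \<inter> f) < 2" using card fin by (metis Int_lower1 psubsetI psubset_card_mono)
  moreover have "card (e \<inter> f) = 0 \<longleftrightarrow> e \<inter> f = {}" using fin by simp
  ultimately show ?thesis by auto
qed

lemma line_graph_adjacency_apply:
  assumes G: "simple_graph V E" and e: "e \<in> E"
  shows "(\<Sum>f\<in>E. adjacency_fun (line_graph_edges E) e f * y f) + 2 * y e = edge_sum (vertex_sum E y) e"
proof -
  have E: "finite E" by (rule simple_graph_finite_edges[OF G])
  have meet: "real (card (e \<inter> f)) = (if e = f then 2 else adjacency_fun (line_graph_edges E) e f)"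
    if f: "f \<in> E" for f
    using simple_graph_card_edge[OF G e] card_inter_edges[OF G e f] line_graph_edge_iff[OF e f]
    by (cases "e = f") (simp_all add: adjacency_fun_def)
  have "edge_sum (vertex_sum E y) e = (\<Sum>f\<in>E. \<Sum>w\<in>e. if w \<in> f then y f else 0)"
    using E by (simp add: edge_sum_def vertex_sum_def sum.inter_filter) (rule sum.swap)
  also have "\<dots> = (\<Sum>f\<in>E. real (card (e \<inter> f)) * y f)"
  proof (rule sum.cong[OF refl])
    fix f
    have "finite e" using simple_graph_card_edge[OF G e] by (auto intro: card_ge_0_finite)
    moreover have "{w\<in>e. w \<in> f} = e \<inter> f" by blast
    ultimately show "(\<Sum>w\<in>e. if w \<in> f then y f else 0) = real (card (e \<inter> f)) * y f"
      using sum.inter_filter[of e "\<lambda>_. y f" "\<lambda>w. w \<in> f"] by simp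
  qed
  also have "\<dots> = 2 * y e + (\<Sum>f\<in>E - {e}. real (card (e \<inter> f)) * y f)"
    using sum.remove[OF E e, of "\<lambda>f. real (card (e \<inter> f)) * y f"] meet[OF e] by simp
  also have "(\<Sum>f\<in>E - {e}. real (card (e \<inter> f)) * y f)
      = (\<Sum>f\<in>E - {e}. adjacency_fun (line_graph_edges E) e f * y f)"
    by (intro sum.cong refl) (auto simp: meet)
  also have "\<dots> = (\<Sum>f\<in>E. adjacency_fun (line_graph_edges E) e f * y f)"
    using sum.remove[OF E e, of "\<lambda>f. adjacency_fun (line_graph_edges E) e f * y f"]
    by (simp add: adjacency_fun_line_graph_self)
  finally show ?thesis by simp
qed

lemma fun_eigenvalue_cong:
  assumes "\<And>x v. v \<in> S \<Longrightarrow> T x v = T' x v"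
  shows "fun_eigenvalue S T \<mu> \<longleftrightarrow> fun_eigenvalue S T' \<mu>"
  using assms unfolding fun_eigenvalue_def by auto

lemma fun_eigenvalue_shift:
  "fun_eigenvalue S (\<lambda>x v. T x v + c * x v) (\<mu> + c) \<longleftrightarrow> fun_eigenvalue S T \<mu>"
  unfolding fun_eigenvalue_def by (simp add: algebra_simps)

lemma adjacency_fun_commute: "adjacency_fun E a b = adjacency_fun E b a"
  by (simp add: adjacency_fun_def insert_commute)

lemma signless_laplacian_eigenvalue_iff:
  assumes G: "simple_graph V E"
  shows "\<mu> \<in># eigenvalues (signless_laplacian V E) \<longleftrightarrow>
    fun_eigenvalue V (\<lambda>x. vertex_sum E (edge_sum x)) \<mu>"
proof -
  have V: "finite V" using G by (simp add: simple_graph_def)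
  show ?thesis
    unfolding signless_laplacian_indexed[OF V] eigenvalues_indexed_mat[OF V]
    by (intro fun_eigenvalue_cong) (rule signless_laplacian_apply[OF G])
qed

lemma line_graph_eigenvalue_iff:
  assumes G: "simple_graph V E"
  shows "\<theta> \<in># eigenvalues (adj_matrix E (line_graph_edges E)) \<longleftrightarrow>
    fun_eigenvalue E (\<lambda>y. edge_sum (vertex_sum E y)) (\<theta> + 2)"
proof -
  have E: "finite E" by (rule simple_graph_finite_edges[OF G])
  have "\<theta> \<in># eigenvalues (adj_matrix E (line_graph_edges E)) \<longleftrightarrow>
      fun_eigenvalue E (\<lambda>y e. \<Sum>f\<in>E. adjacency_fun (line_graph_edges E) e f * y f) \<theta>"
    unfolding adj_matrix_indexed by (rule eigenvalues_indexed_mat[OF E])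
  also have "\<dots> \<longleftrightarrow> fun_eigenvalue E
      (\<lambda>y e. (\<Sum>f\<in>E. adjacency_fun (line_graph_edges E) e f * y f) + 2 * y e) (\<theta> + 2)"
    by (rule fun_eigenvalue_shift[symmetric])
  also have "\<dots> \<longleftrightarrow> fun_eigenvalue E (\<lambda>y. edge_sum (vertex_sum E y)) (\<theta> + 2)"
    by (intro fun_eigenvalue_cong) (rule line_graph_adjacency_apply[OF G])
  finally show ?thesis .
qed

lemma signless_laplacian_eigenvalue_nonneg:
  assumes G: "simple_graph V E" and "\<mu> \<in># eigenvalues (signless_laplacian V E)"
  shows "0 \<le> \<mu>"
proof (rule fun_eigenvalue_nonneg)
  show "finite V" using G by (simp add: simple_graph_def)
  show "0 \<le> (\<Sum>v\<in>V. x v * vertex_sum E (edge_sum x) v)" for x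
  proof -
    have "0 \<le> (\<Sum>e\<in>E. edge_sum x e * edge_sum x e)" by (simp add: sum_nonneg)
    then show ?thesis using incidence_adjoint[OF G, of "edge_sum x" x] by simp
  qed
  show "fun_eigenvalue V (\<lambda>x. vertex_sum E (edge_sum x)) \<mu>"
    using assms signless_laplacian_eigenvalue_iff by blast
qed

lemma line_graph_eigenvalue_ge:
  assumes G: "simple_graph V E" and "\<theta> \<in># eigenvalues (adj_matrix E (line_graph_edges E))"
  shows "-2 \<le> \<theta>"
proof -
  have "0 \<le> \<theta> + 2"
  proof (rule fun_eigenvalue_nonneg)
    show "finite E" by (rule simple_graph_finite_edges[OF G])
    show "0 \<le> (\<Sum>e\<in>E. y e * edge_sum (vertex_sum E y) e)" for y
      using incidence_adjoint[OF G, of y "vertex_sum E y"] by (simp add: sum_nonneg)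
    show "fun_eigenvalue E (\<lambda>y. edge_sum (vertex_sum E y)) (\<theta> + 2)"
      using assms line_graph_eigenvalue_iff by blast
  qed
  then show ?thesis by simp
qed

lemma fun_eigenvalue_incidence_swap:
  assumes G: "simple_graph V E" and \<mu>: "\<mu> \<noteq> 0"
  shows "fun_eigenvalue E (\<lambda>y. edge_sum (vertex_sum E y)) \<mu> \<longleftrightarrow>
    fun_eigenvalue V (\<lambda>x. vertex_sum E (edge_sum x)) \<mu>"
proof
  assume "fun_eigenvalue E (\<lambda>y. edge_sum (vertex_sum E y)) \<mu>"
  then obtain y e0 where e0: "e0 \<in> E" "y e0 \<noteq> 0" and eq: "\<forall>e\<in>E. edge_sum (vertex_sum E y) e = \<mu> * y e"
    unfolding fun_eigenvalue_def by blast
  have "\<forall>v\<in>V. vertex_sum E (edge_sum (vertex_sum E y)) v = \<mu> * vertex_sum E y v"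
    using eq by (simp add: vertex_sum_def sum_distrib_left)
  moreover have "\<exists>v\<in>V. vertex_sum E y v \<noteq> 0"
  proof (rule ccontr)
    assume "\<not> ?thesis"
    then have "edge_sum (vertex_sum E y) e0 = 0"
      using simple_graph_edge_subset[OF G e0(1)] by (auto simp: edge_sum_def intro: sum.neutral)
    with eq e0 \<mu> show False by simp
  qed
  ultimately show "fun_eigenvalue V (\<lambda>x. vertex_sum E (edge_sum x)) \<mu>"
    unfolding fun_eigenvalue_def by blast
next
  assume "fun_eigenvalue V (\<lambda>x. vertex_sum E (edge_sum x)) \<mu>"
  then obtain x v0 where v0: "v0 \<in> V" "x v0 \<noteq> 0" and eq: "\<forall>v\<in>V. vertex_sum E (edge_sum x) v = \<mu> * x v"
    unfolding fun_eigenvalue_def by blast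
  have "\<forall>e\<in>E. edge_sum (vertex_sum E (edge_sum x)) e = \<mu> * edge_sum x e"
  proof
    fix e assume "e \<in> E"
    then have "e \<subseteq> V" by (rule simple_graph_edge_subset[OF G])
    with eq show "edge_sum (vertex_sum E (edge_sum x)) e = \<mu> * edge_sum x e"
      by (auto simp: edge_sum_def sum_distrib_left intro: sum.cong)
  qed
  moreover have "\<exists>e\<in>E. edge_sum x e \<noteq> 0"
  proof (rule ccontr)
    assume "\<not> ?thesis"
    then have "vertex_sum E (edge_sum x) v0 = 0" by (auto simp: vertex_sum_def intro: sum.neutral)
    with eq v0 \<mu> show False by simp
  qed
  ultimately show "fun_eigenvalue E (\<lambda>y. edge_sum (vertex_sum E y)) \<mu>"
    unfolding fun_eigenvalue_def by blast
qed

lemma sum_line_graph_eigenvalues: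
  assumes G: "simple_graph V E"
  shows "sum_mset (eigenvalues (adj_matrix E (line_graph_edges E))) = 0"
proof -
  have "sum_mset (eigenvalues (indexed_mat E (adjacency_fun (line_graph_edges E))))
      = (\<Sum>e\<in>E. adjacency_fun (line_graph_edges E) e e)"
    by (rule indexed_mat_spectrum(2)[OF simple_graph_finite_edges[OF G]]) (rule adjacency_fun_commute)
  then show ?thesis by (simp add: adj_matrix_indexed adjacency_fun_line_graph_self)
qed

section \<open>Energy of the line graph\<close>

lemma sum_mset_nonneg_eq_0_iff:
  fixes f :: "'a \<Rightarrow> real"
  assumes "\<forall>x\<in>#M. 0 \<le> f x"
  shows "0 \<le> (\<Sum>x\<in>#M. f x) \<and> ((\<Sum>x\<in>#M. f x) = 0 \<longleftrightarrow> (\<forall>x\<in>#M. f x = 0))"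
  using assms by (induction M) (auto simp: add_nonneg_eq_0_iff)

lemma sum_abs_le_4_count_neg:
  fixes M :: "real multiset"
  assumes sum: "sum_mset M = 0" and ge: "\<forall>x\<in>#M. -2 \<le> x"
  shows "(\<Sum>x\<in>#M. \<bar>x\<bar>) \<le> 4 * real (size (filter_mset (\<lambda>x. x < 0) M))"
    and "(\<Sum>x\<in>#M. \<bar>x\<bar>) = 4 * real (size (filter_mset (\<lambda>x. x < 0) M)) \<longleftrightarrow>
      (\<forall>x\<in>#M. x < 0 \<longrightarrow> x = -2)"
proof -
  define g where "g x = (if x < 0 then 4 else 0) + x - \<bar>x\<bar>" for x :: real
  \<comment> \<open>As |x| - x = 2 max (-x) 0, g x \<ge> 0 for x \<ge> -2, with equality iff x \<ge> 0 or x = -2.\<close>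
  have "4 * real (size (filter_mset (\<lambda>x. x < 0) N)) - (\<Sum>x\<in>#N. \<bar>x\<bar>) = (\<Sum>x\<in>#N. g x) - sum_mset N"
    for N by (induction N) (simp_all add: g_def)
  then have gap: "4 * real (size (filter_mset (\<lambda>x. x < 0) M)) - (\<Sum>x\<in>#M. \<bar>x\<bar>) = (\<Sum>x\<in>#M. g x)"
    using sum by simp
  have "\<forall>x\<in>#M. 0 \<le> g x" using ge by (auto simp: g_def)
  note g_sum = sum_mset_nonneg_eq_0_iff[OF this]
  have g0: "(\<forall>x\<in>#M. g x = 0) \<longleftrightarrow> (\<forall>x\<in>#M. x < 0 \<longrightarrow> x = -2)"
    using ge by (auto simp: g_def)
  show "(\<Sum>x\<in>#M. \<bar>x\<bar>) \<le> 4 * real (size (filter_mset (\<lambda>x. x < 0) M))"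
    using gap g_sum by linarith
  show "(\<Sum>x\<in>#M. \<bar>x\<bar>) = 4 * real (size (filter_mset (\<lambda>x. x < 0) M)) \<longleftrightarrow>
      (\<forall>x\<in>#M. x < 0 \<longrightarrow> x = -2)"
    unfolding g0[symmetric] g_sum[THEN conjunct2, symmetric] gap[symmetric] by linarith
qed

definition no_signless_eigenvalue_in_0_2 :: "'a set \<Rightarrow> 'a set set \<Rightarrow> bool" where
  "no_signless_eigenvalue_in_0_2 V E \<longleftrightarrow>
    (\<forall>\<mu>\<in>#eigenvalues (signless_laplacian V E). \<mu> \<notin> {0<..<2})"

lemma no_signless_eigenvalue_in_0_2_iff:
  assumes G: "simple_graph V E"
  shows "no_signless_eigenvalue_in_0_2 V E \<longleftrightarrow>
    (\<forall>\<mu>\<in>{0<..<2}. \<not> fun_eigenvalue V (\<lambda>x. vertex_sum E (edge_sum x)) \<mu>)"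
  by (auto simp: no_signless_eigenvalue_in_0_2_def signless_laplacian_eigenvalue_iff[OF G])

lemma line_graph_energy:
  assumes G: "simple_graph V E"
  shows "energy E (line_graph_edges E) \<le> 4 * real (neg_inertia E (line_graph_edges E))"
    and "energy E (line_graph_edges E) = 4 * real (neg_inertia E (line_graph_edges E)) \<longleftrightarrow>
      no_signless_eigenvalue_in_0_2 V E"
proof -
  let ?L = "eigenvalues (adj_matrix E (line_graph_edges E))"
  have ge: "\<forall>\<theta>\<in>#?L. -2 \<le> \<theta>" using line_graph_eigenvalue_ge[OF G] by blast
  note energy = sum_abs_le_4_count_neg[OF sum_line_graph_eigenvalues[OF G] ge]
  show "energy E (line_graph_edges E) \<le> 4 * real (neg_inertia E (line_graph_edges E))"
    unfolding energy_def neg_inertia_def by (rule energy(1))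
  have "(\<forall>\<theta>\<in>#?L. \<theta> < 0 \<longrightarrow> \<theta> = -2) \<longleftrightarrow>
      (\<forall>\<mu>\<in>{0<..<2}. \<not> fun_eigenvalue E (\<lambda>y. edge_sum (vertex_sum E y)) \<mu>)"
  proof
    assume neg: "\<forall>\<theta>\<in>#?L. \<theta> < 0 \<longrightarrow> \<theta> = -2"
    show "\<forall>\<mu>\<in>{0<..<2}. \<not> fun_eigenvalue E (\<lambda>y. edge_sum (vertex_sum E y)) \<mu>"
    proof (intro ballI notI)
      fix \<mu> assume "\<mu> \<in> {0<..<2}" "fun_eigenvalue E (\<lambda>y. edge_sum (vertex_sum E y)) \<mu>"
      then show False using neg line_graph_eigenvalue_iff[OF G, of "\<mu> - 2"] by force
    qed
  next
    assume "\<forall>\<mu>\<in>{0<..<2}. \<not> fun_eigenvalue E (\<lambda>y. edge_sum (vertex_sum E y)) \<mu>"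
    then show "\<forall>\<theta>\<in>#?L. \<theta> < 0 \<longrightarrow> \<theta> = -2"
      using ge line_graph_eigenvalue_iff[OF G] by force
  qed
  also have "\<dots> \<longleftrightarrow> no_signless_eigenvalue_in_0_2 V E"
    unfolding no_signless_eigenvalue_in_0_2_iff[OF G]
    using fun_eigenvalue_incidence_swap[OF G] by auto
  finally show "energy E (line_graph_edges E) = 4 * real (neg_inertia E (line_graph_edges E)) \<longleftrightarrow>
      no_signless_eigenvalue_in_0_2 V E"
    using energy(2) unfolding energy_def neg_inertia_def by simp
qed

lemma signless_form:
  assumes "simple_graph V E"
  shows "(\<Sum>v\<in>V. x v * vertex_sum E (edge_sum x) v) = (\<Sum>e\<in>E. (edge_sum x e)^2)"
  using incidence_adjoint[OF assms, of "edge_sum x" x] by (simp add: power2_eq_square)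

section \<open>Connected components\<close>

lemma symp_adjacent: "symp (adjacent E)"
  by (auto simp: symp_def adjacent_def insert_commute)

locale graph_component =
  fixes V :: "'a set" and E :: "'a set set" and C :: "'a set"
  assumes graph: "simple_graph V E" and component: "is_component V E C"
begin

abbreviation "EC \<equiv> induced_edges E C"

lemma component_root: obtains r where "r \<in> V" and "C = {u\<in>V. (adjacent E)\<^sup>*\<^sup>* r u}"
  using component unfolding is_component_def by blast

lemma C_subset: "C \<subseteq> V"
proof -
  obtain r where "C = {u\<in>V. (adjacent E)\<^sup>*\<^sup>* r u}" by (rule component_root)
  then show ?thesis by blast
qed

lemma finite_C: "finite C"
  using C_subset graph finite_subset by (auto simp: simple_graph_def)

lemma C_nonempty: obtains v where "v \<in> C"
proof -
  obtain r where "r \<in> V" "C = {u\<in>V. (adjacent E)\<^sup>*\<^sup>* r u}" by (rule component_root)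
  then have "r \<in> C" by simp
  then show thesis by (rule that)
qed

lemma reachable_in_C:
  assumes "u \<in> C" and "w \<in> C"
  shows "(adjacent E)\<^sup>*\<^sup>* u w"
proof -
  obtain r where "C = {u\<in>V. (adjacent E)\<^sup>*\<^sup>* r u}" by (rule component_root)
  with assms have "(adjacent E)\<^sup>*\<^sup>* r u" "(adjacent E)\<^sup>*\<^sup>* r w" by auto
  then show ?thesis by (metis rtranclp_trans sympD symp_rtranclp symp_adjacent)
qed

lemma component_closed:
  assumes "v \<in> C" and "{v, u} \<in> E"
  shows "u \<in> C"
proof -
  obtain r where C: "C = {u\<in>V. (adjacent E)\<^sup>*\<^sup>* r u}" by (rule component_root)
  with assms have "(adjacent E)\<^sup>*\<^sup>* r u"
    by (auto simp: adjacent_def intro: rtranclp.rtrancl_into_rtrancl)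
  with C assms(2) simple_graph_pair[OF graph] show ?thesis by blast
qed

lemma edge_at_C_subset:
  assumes "v \<in> C" and "e \<in> E" and "v \<in> e"
  shows "e \<subseteq> C"
proof -
  obtain a b where e: "e = {a, b}" using simple_graph_edgeE[OF graph assms(2)] by blast
  with assms have "e = {v, b} \<or> e = {v, a}" by auto
  with assms component_closed show ?thesis by blast
qed

lemma simple_graph_component: "simple_graph C EC"
  using finite_C graph by (fastforce simp: simple_graph_def induced_edges_def)

lemma edges_at_component: "v \<in> C \<Longrightarrow> {e\<in>EC. v \<in> e} = {e\<in>E. v \<in> e}"
  using edge_at_C_subset[of v] by (auto simp: induced_edges_def)

lemma vertex_sum_component: "v \<in> C \<Longrightarrow> vertex_sum EC y v = vertex_sum E y v"
  by (simp add: vertex_sum_def edges_at_component)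

lemma component_induct:
  assumes v1: "v1 \<in> C" and P1: "P v1"
    and step: "\<And>u w. u \<in> C \<Longrightarrow> {u, w} \<in> EC \<Longrightarrow> P u \<Longrightarrow> P w"
  shows "\<forall>u\<in>C. P u"
proof
  fix u assume "u \<in> C"
  with v1 have "(adjacent E)\<^sup>*\<^sup>* v1 u" by (rule reachable_in_C)
  then have "u \<in> C \<and> P u"
  proof (induction rule: rtranclp_induct)
    case (step y z)
    then have "y \<in> C" "P y" "{y, z} \<in> E" by (auto simp: adjacent_def)
    moreover from this(1,3) have "z \<in> C" by (rule component_closed)
    ultimately show ?case using assms(3)[of y z] by (simp add: induced_edges_def)
  qed (use v1 P1 in simp)
  then show "P u" ..
qed

lemma vertex_of_degree_ge_2:
  assumes "2 \<le> card EC"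
  obtains v where "v \<in> C" and "2 \<le> degree EC v"
proof (rule ccontr)
  assume "\<not> thesis"
  with that have deg: "\<forall>v\<in>C. degree EC v \<le> 1" by force
  have fin: "finite EC" by (rule simple_graph_finite_edges[OF simple_graph_component])
  from assms obtain e1 where e1: "e1 \<in> EC" by fastforce
  then obtain a b where ab: "a \<noteq> b" "a \<in> C" "e1 = {a, b}"
    using simple_graph_edgeE[OF simple_graph_component] by metis
  \<comment> \<open>With all degrees at most 1, the component consists of the edge e1 alone.\<close>
  have "\<forall>u\<in>C. u \<in> {a, b}"
  proof (rule component_induct[OF ab(2)])
    fix u w assume u: "u \<in> C" and uw: "{u, w} \<in> EC" and "u \<in> {a, b}"
    with e1 ab have "{e1, {u, w}} \<subseteq> {e\<in>EC. u \<in> e}" by auto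
    moreover have "card {e\<in>EC. u \<in> e} \<le> 1" using deg u by (simp add: degree_def)
    ultimately have "card {e1, {u, w}} \<le> 1"
      using card_mono[of "{e\<in>EC. u \<in> e}" "{e1, {u, w}}"] fin by simp
    then have "e1 = {u, w}" by (cases "e1 = {u, w}") auto
    then show "w \<in> {a, b}" using ab by auto
  qed simp
  have "EC \<subseteq> {e1}"
  proof
    fix e assume "e \<in> EC"
    then obtain c d where "c \<noteq> d" "c \<in> C" "d \<in> C" "e = {c, d}"
      using simple_graph_edgeE[OF simple_graph_component] by metis
    with \<open>\<forall>u\<in>C. u \<in> {a, b}\<close> ab show "e \<in> {e1}" by auto
  qed
  then have "card EC \<le> 1" using card_mono[of "{e1}" EC] by simp
  with assms show False by simp
qed

lemma edge_sum_zero_propagate: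
  assumes zero: "\<forall>e\<in>EC. edge_sum x e = 0" and "v1 \<in> C" and "x v1 = 0"
  shows "\<forall>v\<in>C. x v = 0"
proof (rule component_induct[where P = "\<lambda>u. x u = 0", OF assms(2,3)])
  fix u w assume "{u, w} \<in> EC" and "x u = 0"
  then show "x w = 0"
    using zero simple_graph_pair[OF simple_graph_component] by (force simp: edge_sum_pair)
qed

lemma bipartite_if_edge_sum_zero:
  assumes zero: "\<forall>e\<in>EC. edge_sum x e = 0" and "v1 \<in> C" and "x v1 \<noteq> 0"
  shows "bipartite C EC"
proof -
  have sum0: "x u + x w = 0" if "{u, w} \<in> EC" for u w
    using that zero simple_graph_pair[OF simple_graph_component] by (force simp: edge_sum_pair)
  \<comment> \<open>x alternates in sign along edges, so its sign is a 2-colouring.\<close>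
  have "\<forall>u\<in>C. \<bar>x u\<bar> = \<bar>x v1\<bar>"
  proof (rule component_induct[where P = "\<lambda>u. \<bar>x u\<bar> = \<bar>x v1\<bar>", OF assms(2) refl])
    fix u w assume "{u, w} \<in> EC" and "\<bar>x u\<bar> = \<bar>x v1\<bar>"
    then show "\<bar>x w\<bar> = \<bar>x v1\<bar>" using sum0[of u w] by simp
  qed
  with assms(3) have nonzero: "x u \<noteq> 0" if "u \<in> C" for u using that by force
  show ?thesis unfolding bipartite_def
  proof (intro exI[of _ "\<lambda>u. 0 < x u"] ballI impI)
    fix u w assume "u \<in> C" "w \<in> C" "{u, w} \<in> EC"
    then show "(0 < x u) \<noteq> (0 < x w)" using sum0[of u w] nonzero[of u] by auto
  qed
qed

lemma signless_eigenvalue_0_iff_bipartite: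
  "0 \<in># eigenvalues (signless_laplacian C EC) \<longleftrightarrow> bipartite C EC"
  unfolding signless_laplacian_eigenvalue_iff[OF simple_graph_component]
proof
  assume "fun_eigenvalue C (\<lambda>x. vertex_sum EC (edge_sum x)) 0"
  then obtain x v1 where v1: "v1 \<in> C" "x v1 \<noteq> 0" and eq: "\<forall>v\<in>C. vertex_sum EC (edge_sum x) v = 0"
    unfolding fun_eigenvalue_def by auto
  have "(\<Sum>e\<in>EC. (edge_sum x e)^2) = 0"
    using signless_form[OF simple_graph_component, of x] eq by simp
  then have "\<forall>e\<in>EC. edge_sum x e = 0"
    using sum_nonneg_eq_0_iff[OF simple_graph_finite_edges[OF simple_graph_component],
        of "\<lambda>e. (edge_sum x e)^2"] by simp
  with v1 show "bipartite C EC" by (intro bipartite_if_edge_sum_zero)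
next
  assume "bipartite C EC"
  then obtain f :: "'a \<Rightarrow> bool" where f: "\<forall>u\<in>C. \<forall>v\<in>C. {u, v} \<in> EC \<longrightarrow> f u \<noteq> f v"
    unfolding bipartite_def by blast
  define x where "x u = (if f u then 1 else -1 :: real)" for u
  have "edge_sum x e = 0" if e: "e \<in> EC" for e
  proof -
    obtain u w where uw: "u \<noteq> w" "u \<in> C" "w \<in> C" "e = {u, w}"
      using simple_graph_edgeE[OF simple_graph_component e] by blast
    with f e have "f u \<noteq> f w" by blast
    with uw show ?thesis by (auto simp: edge_sum_pair x_def)
  qed
  then have "\<forall>v\<in>C. vertex_sum EC (edge_sum x) v = 0 * x v"
    by (simp add: vertex_sum_def)
  moreover obtain v where "v \<in> C" by (rule C_nonempty)
  moreover have "x v \<noteq> 0" by (simp add: x_def)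
  ultimately show "fun_eigenvalue C (\<lambda>x. vertex_sum EC (edge_sum x)) 0"
    unfolding fun_eigenvalue_def by blast
qed

lemma count_signless_eigenvalue_0_le_1: "count (eigenvalues (signless_laplacian C EC)) 0 \<le> 1"
proof -
  obtain v0 where v0: "v0 \<in> C" by (rule C_nonempty)
  let ?f = "\<lambda>a b. (if a = b then real (degree EC a) else 0) + adjacency_fun EC a b"
  have form: "(\<Sum>v\<in>C. \<Sum>u\<in>C. x v * ?f v u * x u) = (\<Sum>e\<in>EC. (edge_sum x e)^2)" for x
  proof -
    have "(\<Sum>u\<in>C. x v * ?f v u * x u) = x v * vertex_sum EC (edge_sum x) v" if "v \<in> C" for v
    proof -
      have "(\<Sum>u\<in>C. x v * ?f v u * x u) = x v * (\<Sum>u\<in>C. ?f v u * x u)"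
        by (simp add: sum_distrib_left mult.assoc)
      with signless_laplacian_apply[OF simple_graph_component that, of x] show ?thesis by simp
    qed
    then show ?thesis by (simp add: signless_form[OF simple_graph_component])
  qed
  show ?thesis unfolding signless_laplacian_indexed[OF finite_C]
  proof (rule count_eigenvalue_0_indexed_mat_le_1[OF finite_C _ _ v0])
    show "?f u v = ?f v u" for u v by (auto simp: adjacency_fun_commute)
    show "0 \<le> (\<Sum>v\<in>C. \<Sum>u\<in>C. x v * ?f v u * x u)" for x by (simp add: form sum_nonneg)
    fix x assume "x v0 = 0" and "(\<Sum>v\<in>C. \<Sum>u\<in>C. x v * ?f v u * x u) = 0"
    then have "\<forall>e\<in>EC. edge_sum x e = 0"
      using sum_nonneg_eq_0_iff[OF simple_graph_finite_edges[OF simple_graph_component],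
          of "\<lambda>e. (edge_sum x e)^2"] by (simp add: form)
    from this v0 \<open>x v0 = 0\<close> show "\<forall>v\<in>C. x v = 0" by (rule edge_sum_zero_propagate)
  qed
qed

lemma signless_eigenvalue_few_edges:
  assumes few: "card EC < 2" and "\<mu> \<in># eigenvalues (signless_laplacian C EC)"
  shows "\<mu> = 0 \<or> \<mu> = 2"
proof (rule ccontr)
  assume \<mu>: "\<not> (\<mu> = 0 \<or> \<mu> = 2)"
  obtain y v1 where v1: "v1 \<in> C" "y v1 \<noteq> 0" and eq: "\<forall>v\<in>C. vertex_sum EC (edge_sum y) v = \<mu> * y v"
    using assms(2) unfolding signless_laplacian_eigenvalue_iff[OF simple_graph_component] fun_eigenvalue_def
    by blast
  have "finite EC" by (rule simple_graph_finite_edges[OF simple_graph_component])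
  with few consider "EC = {}" | e where "EC = {e}"
  proof (cases "card EC")
    case (Suc k)
    with few have "card EC = 1" by simp
    then obtain e where "EC = {e}" by (rule card_1_singletonE)
    then show thesis by (rule that(2))
  qed (use that(1) in simp)
  then show False
  proof cases
    case 1
    then show False using eq v1 \<mu> by (simp add: vertex_sum_def)
  next
    case (2 e)
    then obtain a b where ab: "a \<noteq> b" "a \<in> C" "b \<in> C" "e = {a, b}"
      using simple_graph_edgeE[OF simple_graph_component] by blast
    have vs: "vertex_sum EC (edge_sum y) v = (if v \<in> e then y a + y b else 0)" for v
    proof -
      have "{e'\<in>EC. v \<in> e'} = (if v \<in> e then {e} else {})" using 2 by auto
      then show ?thesis using ab by (simp add: vertex_sum_def edge_sum_pair)
    qed
    have ya: "\<mu> * y a = y a + y b" and yb: "\<mu> * y b = y a + y b" using eq ab vs by auto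
    then have "\<mu> * y a = \<mu> * y b" by simp
    with \<mu> have "y a = y b" by simp
    with ya have "(\<mu> - 2) * y a = 0" by (simp add: algebra_simps)
    with \<mu> \<open>y a = y b\<close> have "y a = 0" "y b = 0" by simp_all
    moreover have "v1 \<in> e \<or> y v1 = 0" using eq v1 vs[of v1] \<mu> by (cases "v1 \<in> e") auto
    ultimately show False using v1 ab by auto
  qed
qed

lemma fun_eigenvalue_extend_by_zero:
  assumes "fun_eigenvalue C (\<lambda>x. vertex_sum EC (edge_sum x)) \<mu>"
  shows "fun_eigenvalue V (\<lambda>x. vertex_sum E (edge_sum x)) \<mu>"
proof -
  obtain y w where w: "w \<in> C" "y w \<noteq> 0" and eq: "\<forall>v\<in>C. vertex_sum EC (edge_sum y) v = \<mu> * y v"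
    using assms unfolding fun_eigenvalue_def by blast
  define y' where "y' v = (if v \<in> C then y v else 0)" for v
  have "vertex_sum E (edge_sum y') v = \<mu> * y' v" if "v \<in> V" for v
  proof (cases "v \<in> C")
    case True
    have "edge_sum y' e = edge_sum y e" if "e \<in> E" "v \<in> e" for e
      unfolding edge_sum_def
      by (rule sum.cong[OF refl]) (use edge_at_C_subset[OF True that] in \<open>auto simp: y'_def\<close>)
    then have "vertex_sum E (edge_sum y') v = vertex_sum EC (edge_sum y) v"
      unfolding vertex_sum_component[OF True] by (simp add: vertex_sum_def)
    with True eq show ?thesis by (simp add: y'_def)
  next
    case False
    have "edge_sum y' e = 0" if "e \<in> E" "v \<in> e" for e
    proof -
      have "e \<inter> C = {}" using edge_at_C_subset that False by blast
      then show ?thesis unfolding edge_sum_def y'_def by (intro sum.neutral) auto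
    qed
    with False show ?thesis by (simp add: vertex_sum_def y'_def)
  qed
  moreover have "w \<in> V" "y' w \<noteq> 0" using w C_subset by (auto simp: y'_def)
  ultimately show ?thesis unfolding fun_eigenvalue_def by blast
qed

end

lemma fun_eigenvalue_components:
  assumes G: "simple_graph V E" and \<mu>: "0 < \<mu>" "\<mu> < 2"
  shows "fun_eigenvalue V (\<lambda>x. vertex_sum E (edge_sum x)) \<mu> \<longleftrightarrow>
    (\<exists>C. is_component V E C \<and> 2 \<le> card (induced_edges E C) \<and>
      fun_eigenvalue C (\<lambda>x. vertex_sum (induced_edges E C) (edge_sum x)) \<mu>)"
proof
  assume "fun_eigenvalue V (\<lambda>x. vertex_sum E (edge_sum x)) \<mu>"
  then obtain y v1 where v1: "v1 \<in> V" "y v1 \<noteq> 0" and eq: "\<forall>v\<in>V. vertex_sum E (edge_sum y) v = \<mu> * y v"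
    unfolding fun_eigenvalue_def by blast
  define C where "C = {u\<in>V. (adjacent E)\<^sup>*\<^sup>* v1 u}"
  have comp: "is_component V E C" unfolding is_component_def C_def using v1 by blast
  interpret graph_component V E C using G comp by unfold_locales
  have "v1 \<in> C" using v1 by (simp add: C_def)
  then have eig: "fun_eigenvalue C (\<lambda>x. vertex_sum EC (edge_sum x)) \<mu>"
    unfolding fun_eigenvalue_def using v1 eq C_subset vertex_sum_component by (metis subsetD)
  then have "2 \<le> card EC"
    using signless_eigenvalue_few_edges \<mu> signless_laplacian_eigenvalue_iff[OF simple_graph_component]
    by force
  with comp eig show "\<exists>C. is_component V E C \<and> 2 \<le> card (induced_edges E C) \<and>
      fun_eigenvalue C (\<lambda>x. vertex_sum (induced_edges E C) (edge_sum x)) \<mu>" by blast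
next
  assume "\<exists>C. is_component V E C \<and> 2 \<le> card (induced_edges E C) \<and>
      fun_eigenvalue C (\<lambda>x. vertex_sum (induced_edges E C) (edge_sum x)) \<mu>"
  then obtain C where comp: "is_component V E C"
    and eig: "fun_eigenvalue C (\<lambda>x. vertex_sum (induced_edges E C) (edge_sum x)) \<mu>" by blast
  interpret graph_component V E C using G comp by unfold_locales
  from eig show "fun_eigenvalue V (\<lambda>x. vertex_sum E (edge_sum x)) \<mu>"
    by (rule fun_eigenvalue_extend_by_zero)
qed

lemma no_signless_eigenvalue_in_0_2_components:
  assumes G: "simple_graph V E"
  shows "no_signless_eigenvalue_in_0_2 V E \<longleftrightarrow>
    (\<forall>C. is_component V E C \<and> 2 \<le> card (induced_edges E C) \<longrightarrow>
      no_signless_eigenvalue_in_0_2 C (induced_edges E C))"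
proof -
  have "no_signless_eigenvalue_in_0_2 C (induced_edges E C) \<longleftrightarrow>
      (\<forall>\<mu>\<in>{0<..<2}. \<not> fun_eigenvalue C (\<lambda>x. vertex_sum (induced_edges E C) (edge_sum x)) \<mu>)"
    if "is_component V E C" for C
    using graph_component.simple_graph_component[OF graph_component.intro[OF G that]]
    by (rule no_signless_eigenvalue_in_0_2_iff)
  then show ?thesis
    unfolding no_signless_eigenvalue_in_0_2_iff[OF G] using fun_eigenvalue_components[OF G] by auto
qed

section \<open>The spectral condition on a single component\<close>

lemma sum_squares_le_square_sum:
  fixes M :: "real multiset"
  assumes "\<forall>t\<in>#M. 0 \<le> t"
  shows "(\<Sum>t\<in>#M. t^2) \<le> (sum_mset M)^2 \<and> 0 \<le> sum_mset M"
  using assms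
proof (induction M)
  case (add x M)
  define S where "S = sum_mset M"
  from add have x: "0 \<le> x" and S: "0 \<le> S" and IH: "(\<Sum>t\<in>#M. t^2) \<le> S^2"
    by (auto simp: S_def)
  have "0 \<le> 2 * x * S" using x S by simp
  then have "x^2 + (\<Sum>t\<in>#M. t^2) \<le> (x + S)^2" using IH power2_sum[of x S] by linarith
  moreover have "0 \<le> x + S" using x S by simp
  ultimately show ?case by (simp add: S_def)
qed simp

lemma sum_squares_bound_if_ge_2:
  fixes N :: "real multiset"
  assumes "\<forall>a\<in>#N. 2 \<le> a"
  defines "s \<equiv> sum_mset N - 2 * real (size N)"
  shows "0 \<le> s" and "(\<Sum>a\<in>#N. a^2) \<le> 4 * real (size N) + 4 * s + s^2"
proof -
  \<comment> \<open>Write a = 2 + t with t \<ge> 0 and use that the t^2 sum to at most (\<Sum> t)^2.\<close>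
  let ?T = "image_mset (\<lambda>a. a - 2) N"
  have "sum_mset ?T = s" unfolding s_def by (induction N) (auto simp: algebra_simps)
  moreover have "(\<Sum>a\<in>#N. a^2) = (\<Sum>t\<in>#?T. t^2) + 4 * sum_mset ?T + 4 * real (size N)"
    by (induction N) (auto simp: algebra_simps power2_eq_square)
  moreover have "(\<Sum>t\<in>#?T. t^2) \<le> (sum_mset ?T)^2 \<and> 0 \<le> sum_mset ?T"
    using assms by (intro sum_squares_le_square_sum) auto
  ultimately show "0 \<le> s" and "(\<Sum>a\<in>#N. a^2) \<le> 4 * real (size N) + 4 * s + s^2" by auto
qed

lemma le_1_if_sum_squares_le_sum:
  fixes d :: "'a \<Rightarrow> nat"
  assumes "finite C" and "(\<Sum>v\<in>C. real (d v)^2) \<le> (\<Sum>v\<in>C. real (d v))"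
  shows "\<forall>v\<in>C. d v \<le> 1"
proof -
  have nonneg: "0 \<le> real (d v)^2 - real (d v)" for v
    by (cases "d v") (auto simp: power2_eq_square)
  have "(\<Sum>v\<in>C. real (d v)^2 - real (d v)) \<le> 0" using assms(2) by (simp add: sum_subtractf)
  then have "\<forall>v\<in>C. real (d v)^2 - real (d v) = 0"
    using sum_nonneg_eq_0_iff[OF assms(1), of "\<lambda>v. real (d v)^2 - real (d v)"] nonneg
    by (meson antisym sum_nonneg)
  then show ?thesis by (auto simp: power2_eq_square)
qed

lemma all_eq_2_if_le_2:
  fixes d :: "'a \<Rightarrow> nat"
  assumes "finite C" and "\<forall>v\<in>C. d v \<le> 2" and "(\<Sum>v\<in>C. d v) = 2 * card C"
  shows "\<forall>v\<in>C. d v = 2"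
proof (rule ccontr)
  assume "\<not> ?thesis"
  with assms(2) have "(\<Sum>v\<in>C. d v) < (\<Sum>v\<in>C. 2)"
    by (intro sum_strict_mono_ex1[OF assms(1)]) (auto simp: le_less)
  with assms(3) show False by simp
qed

lemma sorted_nth_0_ge_iff:
  fixes xs :: "'b::linorder list"
  assumes "sorted xs" and "xs \<noteq> []"
  shows "c \<le> xs ! 0 \<longleftrightarrow> (\<forall>a\<in>set xs. c \<le> a)"
  using assms by (cases xs) auto

lemma le_last_of_sorted_desc_iff:
  fixes M :: "'b::linorder multiset"
  assumes "size M = n" and "1 \<le> n"
  shows "c \<le> rev (sorted_list_of_multiset M) ! (n - 1) \<longleftrightarrow> (\<forall>a\<in>#M. c \<le> a)"
proof -
  let ?xs = "sorted_list_of_multiset M"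
  have "length ?xs = n" using assms(1) by (metis size_mset mset_sorted_list_of_multiset)
  then have "rev ?xs ! (n - 1) = ?xs ! 0" using assms(2) by (simp add: rev_nth)
  moreover have "?xs \<noteq> []" using \<open>length ?xs = n\<close> assms(2) by auto
  ultimately show ?thesis using sorted_nth_0_ge_iff[of ?xs c] by simp
qed

lemma le_second_last_of_sorted_desc_iff:
  fixes M :: "'b::linorder multiset"
  assumes "size M = n" and "2 \<le> n" and "M = add_mset m N" and "\<forall>a\<in>#N. m \<le> a"
  shows "c \<le> rev (sorted_list_of_multiset M) ! (n - 2) \<longleftrightarrow> (\<forall>a\<in>#N. c \<le> a)"
proof -
  let ?ys = "sorted_list_of_multiset N"
  have M: "sorted_list_of_multiset M = m # ?ys"
    using assms(3,4) by (simp add: sorted_list_of_multiset_insert insort_is_Cons)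
  have "length ?ys = n - 1" using assms(1,3) by (metis size_mset mset_sorted_list_of_multiset size_add_mset diff_Suc_1)
  moreover have "n - 2 < n - 1" using assms(2) by simp
  ultimately have "rev (sorted_list_of_multiset M) ! (n - 2) = ?ys ! 0"
    by (simp add: M nth_append rev_nth)
  moreover have "?ys \<noteq> []" using \<open>length ?ys = n - 1\<close> assms(2) by auto
  ultimately show ?thesis using sorted_nth_0_ge_iff[of ?ys c] by simp
qed

lemma C4_no_signless_eigenvalue_in_0_2:
  assumes G: "simple_graph W F" and "is_C4 W F"
  shows "no_signless_eigenvalue_in_0_2 W F"
  unfolding no_signless_eigenvalue_in_0_2_iff[OF G]
proof (intro ballI notI)
  fix \<mu> assume \<mu>: "\<mu> \<in> {0<..<2}" and "fun_eigenvalue W (\<lambda>x. vertex_sum F (edge_sum x)) \<mu>"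
  then obtain y v1 where v1: "v1 \<in> W" "y v1 \<noteq> 0" and eq: "\<forall>v\<in>W. vertex_sum F (edge_sum y) v = \<mu> * y v"
    unfolding fun_eigenvalue_def by blast
  obtain a b c d where dist: "distinct [a, b, c, d]" and W: "W = {a, b, c, d}"
    and F: "F = {{a, b}, {b, c}, {c, d}, {d, a}}" using assms(2) unfolding is_C4_def by blast
  have at_vertex: "vertex_sum F (edge_sum y) u = 2 * y u + y p + y q"
    if "{e\<in>F. u \<in> e} = {{u, p}, {q, u}}" "distinct [u, p, q]" for u p q
  proof -
    from that(2) have "edge_sum y {u, p} = y u + y p" "edge_sum y {q, u} = y q + y u"
      by (auto intro!: edge_sum_pair)
    with that show ?thesis by (simp add: vertex_sum_def doubleton_eq_iff)
  qed
  have "{e\<in>F. a \<in> e} = {{a, b}, {d, a}}" "{e\<in>F. b \<in> e} = {{b, c}, {a, b}}"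
    "{e\<in>F. c \<in> e} = {{c, d}, {b, c}}" "{e\<in>F. d \<in> e} = {{d, a}, {c, d}}"
    using dist unfolding F by (auto simp: doubleton_eq_iff)
  with at_vertex eq dist W
  have e: "\<mu> * y a = 2 * y a + y b + y d" "\<mu> * y b = 2 * y b + y c + y a"
    "\<mu> * y c = 2 * y c + y d + y b" "\<mu> * y d = 2 * y d + y a + y c" by auto
  \<comment> \<open>The Q-spectrum of the 4-cycle is 0, 2, 2, 4.\<close>
  have "(\<mu> - 2) * (y a - y c) = 0" "(\<mu> - 2) * (y b - y d) = 0" using e by (simp_all add: algebra_simps)
  with \<mu> have ac: "y a = y c" and bd: "y b = y d" by auto
  with e have "(\<mu> - 2) * y a = 2 * y b" "(\<mu> - 2) * y b = 2 * y a" by (simp_all add: algebra_simps)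
  then have "(\<mu> * (\<mu> - 4)) * y a = 0" by (simp add: algebra_simps)
  with \<mu> have "y a = 0" by auto
  with \<open>(\<mu> - 2) * y a = 2 * y b\<close> have "y b = 0" by simp
  with \<open>y a = 0\<close> ac bd v1 W show False by auto
qed

context graph_component
begin

lemma component_spectrum:
  shows "size (eigenvalues (signless_laplacian C EC)) = card C"
    and "sum_mset (eigenvalues (signless_laplacian C EC)) = 2 * real (card EC)"
    and "(\<Sum>a\<in>#eigenvalues (signless_laplacian C EC). a^2)
      = (\<Sum>v\<in>C. real (degree EC v)^2) + 2 * real (card EC)"
proof -
  let ?f = "\<lambda>a b. (if a = b then real (degree EC a) else 0) + adjacency_fun EC a b"
  have "?f u v = ?f v u" for u v by (auto simp: adjacency_fun_commute)
  note spec = indexed_mat_spectrum[OF finite_C, of ?f, OF this,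
      folded signless_laplacian_indexed[OF finite_C]]
  have loop: "adjacency_fun EC v v = 0" for v
    using simple_graph_pair[OF simple_graph_component, of v v] by (auto simp: adjacency_fun_def)
  show "size (eigenvalues (signless_laplacian C EC)) = card C" by (rule spec(1))
  show "sum_mset (eigenvalues (signless_laplacian C EC)) = 2 * real (card EC)"
    using spec(2) sum_degree[OF simple_graph_component] by (simp add: loop)
  have row: "(\<Sum>u\<in>C. (?f v u)^2) = real (degree EC v)^2 + real (degree EC v)" if v: "v \<in> C" for v
  proof -
    have nb: "neighbours EC v \<subseteq> C - {v}" by (rule neighbours_subset[OF simple_graph_component])
    have summand: "(?f v u)^2 = (if u = v then real (degree EC v)^2 else 0)
        + (if u \<in> neighbours EC v then 1 else 0)" for u
      using loop[of v] nb by (auto simp: adjacency_fun_def neighbours_def)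
    have "{u\<in>C. u \<in> neighbours EC v} = neighbours EC v" using nb by blast
    then have "(\<Sum>u\<in>C. (?f v u)^2) = real (degree EC v)^2 + real (card (neighbours EC v))"
      unfolding summand sum.distrib using finite_C v by (simp add: sum.delta sum.inter_filter[symmetric])
    then show ?thesis by (simp add: degree_eq_card_neighbours[OF simple_graph_component])
  qed
  show "(\<Sum>a\<in>#eigenvalues (signless_laplacian C EC). a^2)
      = (\<Sum>v\<in>C. real (degree EC v)^2) + 2 * real (card EC)"
    using spec(3) sum_degree[OF simple_graph_component] by (simp add: row sum.distrib)
qed

lemma size_lt_card_edges_if_ge_2:
  fixes N :: "real multiset"
  assumes ge: "\<forall>a\<in>#N. 2 \<le> a" and sum: "sum_mset N = 2 * real (card EC)"
    and sq: "(\<Sum>a\<in>#N. a^2) = (\<Sum>v\<in>C. real (degree EC v)^2) + 2 * real (card EC)"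
    and two: "2 \<le> card EC"
  shows "size N < card EC"
proof -
  note bound = sum_squares_bound_if_ge_2[OF ge]
  have "size N \<le> card EC" using bound(1) sum by simp
  moreover have "size N \<noteq> card EC"
  proof
    assume "size N = card EC"
    \<comment> \<open>Then all a = 2, which forces the sum of squared degrees down to the sum of degrees.\<close>
    with bound(2) sum sq have "(\<Sum>v\<in>C. real (degree EC v)^2) \<le> 2 * real (card EC)" by simp
    then have "\<forall>v\<in>C. degree EC v \<le> 1"
      using sum_degree[OF simple_graph_component] by (intro le_1_if_sum_squares_le_sum[OF finite_C]) simp
    moreover obtain v where "v \<in> C" "2 \<le> degree EC v" by (rule vertex_of_degree_ge_2[OF two])
    ultimately show False by fastforce
  qed
  ultimately show ?thesis by simp
qed

lemma no_signless_eigenvalue_in_0_2_nonbipartite_iff: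
  assumes nb: "\<not> bipartite C EC" and two: "2 \<le> card EC"
  shows "no_signless_eigenvalue_in_0_2 C EC \<longleftrightarrow>
    card C < card EC \<and> (\<forall>a\<in>#eigenvalues (signless_laplacian C EC). 2 \<le> a)"
proof -
  let ?M = "eigenvalues (signless_laplacian C EC)"
  have pos: "0 < a" if "a \<in># ?M" for a
  proof -
    have "0 \<le> a" using that by (rule signless_laplacian_eigenvalue_nonneg[OF simple_graph_component])
    moreover have "a \<noteq> 0" using that nb signless_eigenvalue_0_iff_bipartite by auto
    ultimately show ?thesis by simp
  qed
  then have "no_signless_eigenvalue_in_0_2 C EC \<longleftrightarrow> (\<forall>a\<in>#?M. 2 \<le> a)"
    by (force simp: no_signless_eigenvalue_in_0_2_def)
  moreover have "card C < card EC" if "\<forall>a\<in>#?M. 2 \<le> a"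
    using size_lt_card_edges_if_ge_2[OF that component_spectrum(2,3) two] component_spectrum(1) by simp
  ultimately show ?thesis by blast
qed

lemma neighbours_component_sym: "u \<in> neighbours EC v \<longleftrightarrow> v \<in> neighbours EC u"
  by (simp add: neighbours_def insert_commute)

lemma card_neighbours_component: "v \<in> C \<Longrightarrow> card (neighbours EC v) = degree EC v"
  by (simp add: degree_eq_card_neighbours[OF simple_graph_component])

lemma neighbours_component_subset: "neighbours EC v \<subseteq> C - {v}"
  by (rule neighbours_subset[OF simple_graph_component])

lemma degree_le_card_C: "v \<in> C \<Longrightarrow> degree EC v \<le> card C - 1"
  using card_mono[OF _ neighbours_component_subset, of v] finite_C
  by (simp add: degree_eq_card_neighbours[OF simple_graph_component])

lemma triangle_not_bipartite:
  assumes "card C = 3" and deg: "\<forall>v\<in>C. degree EC v = 2"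
  shows "\<not> bipartite C EC"
proof
  assume "bipartite C EC"
  then obtain f :: "'a \<Rightarrow> bool" where f: "\<forall>u\<in>C. \<forall>v\<in>C. {u, v} \<in> EC \<longrightarrow> f u \<noteq> f v"
    unfolding bipartite_def by blast
  have full: "neighbours EC v = C - {v}" if "v \<in> C" for v
    using that finite_C deg assms(1) neighbours_component_subset card_neighbours_component
    by (intro card_subset_eq) auto
  obtain a b c where abc: "C = {a, b, c}" "a \<noteq> b" "b \<noteq> c" "a \<noteq> c"
    using assms(1) card_3_iff by metis
  then have "{a, b} \<in> EC" "{b, c} \<in> EC" "{a, c} \<in> EC"
    using full by (auto simp: neighbours_def)
  with f abc have "f a \<noteq> f b" "f b \<noteq> f c" "f a \<noteq> f c" by auto
  then show False by auto
qed

lemma neighbours_eq_pair: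
  assumes "v \<in> C" and "degree EC v = 2" and "p \<noteq> q"
    and "{p, q} \<subseteq> neighbours EC v \<or> neighbours EC v \<subseteq> {p, q}"
  shows "neighbours EC v = {p, q}"
proof -
  have fin: "finite (neighbours EC v)" using finite_C neighbours_component_subset finite_subset by blast
  have card: "card (neighbours EC v) = card {p, q}" using assms(1-3) card_neighbours_component by simp
  from assms(4) show ?thesis
  proof
    assume "{p, q} \<subseteq> neighbours EC v"
    from card_subset_eq[OF fin this] card show ?thesis by simp
  next
    assume "neighbours EC v \<subseteq> {p, q}"
    from card_subset_eq[OF _ this] card show ?thesis by simp
  qed
qed

lemma C4_if_2_regular:
  assumes n4: "card C = 4" and deg: "\<forall>v\<in>C. degree EC v = 2" and m4: "card EC = 4"
  shows "is_C4 C EC"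
proof -
  have two: "card (neighbours EC v) = 2" if "v \<in> C" for v
    using that deg card_neighbours_component by simp
  obtain a where aC: "a \<in> C" by (rule C_nonempty)
  obtain b d where bd: "b \<noteq> d" "neighbours EC a = {b, d}" using two[OF aC] card_2_iff by metis
  have bC: "b \<in> C" "b \<noteq> a" and dC: "d \<in> C" "d \<noteq> a"
    using neighbours_component_subset[of a] bd by auto
  have "a \<in> neighbours EC b" using neighbours_component_sym bd by auto
  moreover obtain p q where "p \<noteq> q" "neighbours EC b = {p, q}" using two[OF bC(1)] card_2_iff by metis
  ultimately have "neighbours EC b = {a, if a = p then q else p}" "(if a = p then q else p) \<noteq> a"
    by auto
  then obtain c where c: "neighbours EC b = {a, c}" "c \<noteq> a" by blast
  have cC: "c \<in> C" "c \<noteq> b" using neighbours_component_subset[of b] c by auto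
  \<comment> \<open>If c = d, the triangle a, b, d would use up the degrees, isolating the fourth vertex.\<close>
  have cd: "c \<noteq> d"
  proof
    assume "c = d"
    then have "{a, b} \<subseteq> neighbours EC d" using neighbours_component_sym bd c by auto
    with dC deg bC have nd: "neighbours EC d = {a, b}" by (intro neighbours_eq_pair) auto
    have "card {a, b, d} = 3" using bC dC bd by simp
    with n4 have "{a, b, d} \<noteq> C" by auto
    moreover have "{a, b, d} \<subseteq> C" using aC bC dC by auto
    ultimately obtain w where w: "w \<in> C" "w \<notin> {a, b, d}" by blast
    have "C = {a, b, d, w}"
      using w n4 bd(1) aC bC dC finite_C by (intro card_subset_eq[symmetric]) auto
    moreover obtain u where u: "u \<in> neighbours EC w" using two[OF w(1)] by fastforce
    moreover have "u \<in> C" "u \<noteq> w" using u neighbours_component_subset by auto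
    ultimately have "u \<in> {a, b, d}" "w \<in> neighbours EC u" using neighbours_component_sym by auto
    then show False using bd c nd w \<open>c = d\<close> by auto
  qed
  have dist: "distinct [a, b, c, d]" using bC dC cC c cd bd by auto
  have C: "C = {a, b, c, d}"
    using dist n4 aC bC cC dC finite_C by (intro card_subset_eq[symmetric]) auto
  have "b \<in> neighbours EC c" "a \<notin> neighbours EC c" "neighbours EC c \<subseteq> {a, b, d}"
    using neighbours_component_sym c bd cC cd neighbours_component_subset[of c] C by auto
  then have "neighbours EC c \<subseteq> {b, d}" by auto
  with cC deg bd have nc: "neighbours EC c = {b, d}" by (intro neighbours_eq_pair) auto
  have E4: "{{a, b}, {b, c}, {c, d}, {d, a}} \<subseteq> EC"
    using bd c nc by (auto simp: neighbours_def insert_commute)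
  have "card {{a, b}, {b, c}, {c, d}, {d, a}} = 4" using dist by (auto simp: doubleton_eq_iff)
  with m4 E4 have "{{a, b}, {b, c}, {c, d}, {d, a}} = EC"
    using card_subset_eq[OF simple_graph_finite_edges[OF simple_graph_component] E4] by simp
  with dist C show ?thesis unfolding is_C4_def by (intro exI[of _ a] exI[of _ b] exI[of _ c] exI[of _ d]) simp
qed

lemma unicyclic_card_le_4:
  assumes eq: "card EC = card C"
    and sq: "(\<Sum>v\<in>C. real (degree EC v)^2) \<le> 2 * real (card C) + 8"
  shows "card C \<le> 4" and "card C = 4 \<Longrightarrow> \<forall>v\<in>C. degree EC v \<le> 2"
proof -
  let ?n = "card C" and ?d = "\<lambda>v. real (degree EC v)"
  have hs: "(\<Sum>v\<in>C. ?d v) = 2 * real ?n" using sum_degree[OF simple_graph_component] eq by simp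
  have nonneg: "0 \<le> (?d v - 1) * (?d v - 2)" for v
    by (cases "degree EC v \<le> 1") (auto intro: mult_nonpos_nonpos)
  have "(\<Sum>v\<in>C. (?d v - 1) * (?d v - 2)) = (\<Sum>v\<in>C. ?d v^2) - 3 * (\<Sum>v\<in>C. ?d v) + 2 * real ?n"
    by (simp add: algebra_simps power2_eq_square sum.distrib sum_subtractf sum_distrib_left)
  with sq hs have sum_le: "(\<Sum>v\<in>C. (?d v - 1) * (?d v - 2)) \<le> 8 - 2 * real ?n" by simp
  moreover have sum_ge: "0 \<le> (\<Sum>v\<in>C. (?d v - 1) * (?d v - 2))" by (simp add: sum_nonneg nonneg)
  ultimately show "?n \<le> 4" by simp
  assume "?n = 4"
  with sum_le sum_ge have "(\<Sum>v\<in>C. (?d v - 1) * (?d v - 2)) = 0" by simp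
  then have "\<forall>v\<in>C. (?d v - 1) * (?d v - 2) = 0"
    using sum_nonneg_eq_0_iff[OF finite_C, of "\<lambda>v. (?d v - 1) * (?d v - 2)"] nonneg by simp
  then show "\<forall>v\<in>C. degree EC v \<le> 2" by auto
qed

lemma unicyclic_bipartite_C4:
  assumes bip: "bipartite C EC" and eq: "card EC = card C" and two: "2 \<le> card EC"
    and sq: "(\<Sum>v\<in>C. real (degree EC v)^2) \<le> 2 * real (card C) + 8"
  shows "is_C4 C EC"
proof -
  let ?n = "card C"
  note le4 = unicyclic_card_le_4[OF eq sq]
  have "3 \<le> ?n"
  proof (rule ccontr)
    assume "\<not> 3 \<le> ?n"
    then have "\<forall>v\<in>C. degree EC v \<le> 1" using degree_le_card_C by fastforce
    moreover obtain v where "v \<in> C" "2 \<le> degree EC v" by (rule vertex_of_degree_ge_2[OF two])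
    ultimately show False by fastforce
  qed
  with le4 have "\<forall>v\<in>C. degree EC v \<le> 2" using degree_le_card_C by fastforce
  moreover have "real (\<Sum>v\<in>C. degree EC v) = real (2 * ?n)"
    using sum_degree[OF simple_graph_component] eq by simp
  ultimately have "\<forall>v\<in>C. degree EC v = 2" using all_eq_2_if_le_2[OF finite_C] of_nat_eq_iff by blast
  moreover from this have "?n \<noteq> 3" using triangle_not_bipartite bip by blast
  ultimately show ?thesis using C4_if_2_regular le4(1) \<open>3 \<le> ?n\<close> eq by simp
qed

lemma card_C_ge_2:
  assumes "2 \<le> card EC"
  shows "2 \<le> card C"
proof -
  from assms obtain e where "e \<in> EC" by fastforce
  then obtain a b where "a \<noteq> b" "a \<in> C" "b \<in> C"
    using simple_graph_edgeE[OF simple_graph_component] by metis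
  then have "card {a, b} \<le> card C" using finite_C by (intro card_mono) auto
  with \<open>a \<noteq> b\<close> show ?thesis by simp
qed

lemma bipartite_spectrum:
  assumes "bipartite C EC"
  defines "N \<equiv> eigenvalues (signless_laplacian C EC) - {#0#}"
  shows "eigenvalues (signless_laplacian C EC) = add_mset 0 N"
    and "\<forall>a\<in>#N. 0 < a"
    and "size N = card C - 1" and "sum_mset N = 2 * real (card EC)"
    and "(\<Sum>a\<in>#N. a^2) = (\<Sum>v\<in>C. real (degree EC v)^2) + 2 * real (card EC)"
proof -
  let ?M = "eigenvalues (signless_laplacian C EC)"
  have "0 \<in># ?M" using assms signless_eigenvalue_0_iff_bipartite by simp
  then show M: "?M = add_mset 0 N" by (simp add: N_def)
  have "count N 0 = 0" using count_signless_eigenvalue_0_le_1 by (simp add: N_def)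
  then show "\<forall>a\<in>#N. 0 < a"
    using signless_laplacian_eigenvalue_nonneg[OF simple_graph_component]
    by (metis N_def count_eq_zero_iff in_diffD less_eq_real_def)
  show "size N = card C - 1" and "sum_mset N = 2 * real (card EC)"
    and "(\<Sum>a\<in>#N. a^2) = (\<Sum>v\<in>C. real (degree EC v)^2) + 2 * real (card EC)"
    using component_spectrum unfolding M by simp_all
qed

lemma no_signless_eigenvalue_in_0_2_bipartite_iff:
  assumes bip: "bipartite C EC" and two: "2 \<le> card EC"
  shows "no_signless_eigenvalue_in_0_2 C EC \<longleftrightarrow>
    is_C4 C EC \<or> (card C < card EC \<and> (\<forall>a\<in>#eigenvalues (signless_laplacian C EC) - {#0#}. 2 \<le> a))"
proof -
  let ?M = "eigenvalues (signless_laplacian C EC)"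
  let ?N = "?M - {#0#}"
  note spec = bipartite_spectrum[OF bip]
  have gap: "no_signless_eigenvalue_in_0_2 C EC \<longleftrightarrow> (\<forall>a\<in>#?N. 2 \<le> a)"
    unfolding no_signless_eigenvalue_in_0_2_def using spec(2) by (subst spec(1)) force
  have "card C \<noteq> 0" using card_C_ge_2[OF two] by simp
  show ?thesis
  proof
    assume "no_signless_eigenvalue_in_0_2 C EC"
    with gap have ge: "\<forall>a\<in>#?N. 2 \<le> a" by simp
    show "is_C4 C EC \<or> (card C < card EC \<and> (\<forall>a\<in>#?N. 2 \<le> a))"
    proof (cases "card C < card EC")
      case False
      with size_lt_card_edges_if_ge_2[OF ge spec(4,5) two] spec(3)
      have eq: "card EC = card C" by simp
      \<comment> \<open>Now the a - 2 sum to 2, which bounds the sum of squares.\<close>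
      have "real (size ?N) = real (card C) - 1" using spec(3) \<open>card C \<noteq> 0\<close> by (simp add: of_nat_diff)
      with sum_squares_bound_if_ge_2(2)[OF ge] spec(4,5) eq
      have "(\<Sum>v\<in>C. real (degree EC v)^2) \<le> 2 * real (card C) + 8" by (simp add: algebra_simps)
      with bip eq two show ?thesis by (simp add: unicyclic_bipartite_C4)
    qed (use ge in simp)
  next
    assume "is_C4 C EC \<or> (card C < card EC \<and> (\<forall>a\<in>#?N. 2 \<le> a))"
    then show "no_signless_eigenvalue_in_0_2 C EC"
      using gap C4_no_signless_eigenvalue_in_0_2[OF simple_graph_component] by blast
  qed
qed

lemma no_signless_eigenvalue_in_0_2_component_iff:
  assumes two: "2 \<le> card EC"
  shows "no_signless_eigenvalue_in_0_2 C EC \<longleftrightarrow>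
    (let EC = induced_edges E C; nC = card C in
      (\<not> bipartite C EC \<longrightarrow> card EC > nC \<and> q_eig nC C EC \<ge> 2) \<and>
      (bipartite C EC \<longrightarrow> is_C4 C EC \<or> (card EC > nC \<and> q_eig (nC - 1) C EC \<ge> 2)))"
proof -
  let ?M = "eigenvalues (signless_laplacian C EC)"
  note n2 = card_C_ge_2[OF two]
  have q_last: "2 \<le> q_eig (card C) C EC \<longleftrightarrow> (\<forall>a\<in>#?M. 2 \<le> a)"
    unfolding q_eig_def using le_last_of_sorted_desc_iff[OF component_spectrum(1)] n2 by simp
  have q_second: "2 \<le> q_eig (card C - 1) C EC \<longleftrightarrow> (\<forall>a\<in>#?M - {#0#}. 2 \<le> a)"
    if "bipartite C EC"
  proof -
    have "card C - 1 - 1 = card C - 2" by simp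
    with le_second_last_of_sorted_desc_iff[OF component_spectrum(1) n2 bipartite_spectrum(1)[OF that]]
      bipartite_spectrum(2)[OF that]
    show ?thesis unfolding q_eig_def by (simp add: less_imp_le)
  qed
  show ?thesis
    using no_signless_eigenvalue_in_0_2_nonbipartite_iff[OF _ two]
      no_signless_eigenvalue_in_0_2_bipartite_iff[OF _ two] q_last q_second
    by (cases "bipartite C EC") (simp_all add: Let_def)
qed

end

theorem mainTheorem14:
  fixes V :: "'a set" and E :: "'a set set"
  assumes "simple_graph V E"
  shows "energy E (line_graph_edges E) \<le> 4 * real (neg_inertia E (line_graph_edges E))
    \<and> (energy E (line_graph_edges E) = 4 * real (neg_inertia E (line_graph_edges E))
       \<longleftrightarrow> (\<forall>C. is_component V E C \<and> card (induced_edges E C) \<ge> 2 \<longrightarrow>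
             (let EC = induced_edges E C; nC = card C in
               (\<not> bipartite C EC \<longrightarrow> card EC > nC \<and> q_eig nC C EC \<ge> 2) \<and>
               (bipartite C EC \<longrightarrow> is_C4 C EC \<or> (card EC > nC \<and> q_eig (nC - 1) C EC \<ge> 2)))))"
proof -
  note energy = line_graph_energy[OF assms]
  have "no_signless_eigenvalue_in_0_2 V E \<longleftrightarrow>
      (\<forall>C. is_component V E C \<and> card (induced_edges E C) \<ge> 2 \<longrightarrow>
        (let EC = induced_edges E C; nC = card C in
          (\<not> bipartite C EC \<longrightarrow> card EC > nC \<and> q_eig nC C EC \<ge> 2) \<and>
          (bipartite C EC \<longrightarrow> is_C4 C EC \<or> (card EC > nC \<and> q_eig (nC - 1) C EC \<ge> 2))))"
    unfolding no_signless_eigenvalue_in_0_2_components[OF assms]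
    using graph_component.no_signless_eigenvalue_in_0_2_component_iff[OF graph_component.intro[OF assms]]
    by blast
  with energy show ?thesis by blast
qed

end
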